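(* In the setting described in the context (not-so-bad trader), the following hold: (i) $pnl=(\mathcal{Q}+J^sq+(1-J^s)Q)^{\theta}_{(0)}-(\mathcal{P}^{nsb}+J^sP^{bad}+(1-J^s)P^{nsb})^{\theta}_{(0)}-h$; (ii) $\mathrm{HVA}=\big(J^s(q-Q-(P^{bad}-P^{nsb}))\big)^{\theta}+D+va(K^\theta)$, where $D_t=\mathbb{E}_t\big[J^s_\theta\big(Q_\theta-(P^{nsb}_\theta-P^{bad}_\theta)\big)\big]$ and $va(K^\theta)_t=\mathcal{Q}_{t\wedge\theta}+Q_{t\wedge\theta}-\mathbb{E}_t[\mathcal{Q}_\theta+Q_\theta]$; (iii) $\mathrm{HVA}_0=q_0-\mathbb{E}_0[\mathcal{Q}_\theta]-(p_0-P^{nsb}_0)-\mathbb{E}_0\big[J^s_\theta(P^{nsb}_\theta-p_\theta)\big]$; (iv) $-pnl+(\mathrm{HVA}-\mathrm{HVA}_0)=-(\mathcal{Q}+Q)^{\theta}_{(0)}+(\mathcal{P}^{nsb}+P^{nsb})^{\theta}_{(0)}+h+D_{(0)}+va(K^\theta)_{(0)}$.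
   Context: Let $(\Omega,\mathcal{A},\mathbb{Q})$ be a probability space with a filtration $\mathfrak{F}=(\mathfrak{F}_t)_{0\le t\le T}$ satisfying the usual conditions; $\mathbb{E}_t$ is conditional expectation given $\mathfrak{F}_t$. All processes are adapted, càdlàg, and integrable enough for the conditional expectations to exist. For an integrable adapted process $X$, $va(X)_t=\mathbb{E}_t[X_T-X_t]$. A cash flow is an optional integrable process $\mathcal{Y}$ with $\mathcal{Y}_0=0$; its fair callable value is $\widetilde{va}(\mathcal{Y})_t=\sup_{\tau\in\mathcal{T}^t}\mathbb{E}_t[\mathcal{Y}_\tau-\mathcal{Y}_t]$, $\mathcal{T}^t$ the set of $[t,T]$-valued stopping times. Notation: $X_{(0)}=X-X_0$; $X^\theta$ is $X$ stopped at $\theta$. Data: a cash flow $\mathcal{Q}$ (callable asset) with $Q=\widetilde{va}(\mathcal{Q})$; $K$ is the drift of $\mathcal{Q}+Q$ (unique nondecreasing integrable predictable process with $K_0=0$ such that $\mathcal{Q}+Q+K$ is a martingale on $[0,T]$); a semimartingale $q$ with $q_T=0$ (trader's model price of the asset); a semimartingale $p$ (trader's price of his current static hedge); a model switch stopping time $\tau_s\in(0,T]$; $J^s=\mathbf{1}_{[0,\tau_s)}$. Hedging cash flows $\mathcal{P}^{bad}$ (hedge held before $\tau_s$) and $\mathcal{P}^{good}$ (hedge prescribed by the fair model), with $P^{bad}=va(\mathcal{P}^{bad})$, and $p_t=P^{bad}_t$ for $t<\tau_s$. The exit time is $\theta=\theta_\star\mathbf{1}_{\theta_\star<\tau_s}+\tau_\star\mathbf{1}_{\theta_\star=\tau_s}$,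 where $\theta_\star\le\tau_s$ is the stopping time at which the trader calls according to his (recalibrated) model if before $\tau_s$, and $\tau_\star$ is the optimal call time in the fair valuation model from $\tau_s$ onward; $J^e=\mathbf{1}_{[0,\theta)}$. The asset is always called with zero value in the model used at call time: $J^s_\theta q_\theta+(1-J^s_\theta)Q_\theta=0$. The hedging cash flow is $$\mathcal{P}^{nsb}=(\mathcal{P}^{bad})^{\tau_s}+(1-J^s)J^s_\theta(\mathcal{P}^{bad}-\mathcal{P}^{bad}_{\tau_s})+(1-J^s)(1-J^s_\theta)(\mathcal{P}^{good}-\mathcal{P}^{good}_{\tau_s}),$$ with fair value $P^{nsb}=va(\mathcal{P}^{nsb})$. $h$ is a martingale with $h=h^\theta$. The profit and loss is $$pnl=(\mathcal{Q}+J^sq+(1-J^s)Q)^{\theta}_{(0)}-(\mathcal{P}^{nsb}+J^sp+(1-J^s)P^{nsb})^{\theta}_{(0)}-h-(1-J^e)\big(J^s_\theta q_\theta+(1-J^s_\theta)Q_\theta\big),$$ and $\mathrm{HVA}=-va(pnl)$. *)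

theory Defs
  imports "HOL-Probability.Probability"
begin

text \<open>Processes are maps
  real \<Rightarrow> 'a \<Rightarrow> real (time first), random times are maps 'a \<Rightarrow> real,
  the filtration is F :: real \<Rightarrow> 'a measure (only used on [0,T]).\<close>

definition cexp :: "'a measure \<Rightarrow> (real \<Rightarrow> 'a measure) \<Rightarrow> real \<Rightarrow> ('a \<Rightarrow> real) \<Rightarrow> 'a \<Rightarrow> real" where
  "cexp M F t f = real_cond_exp M (F t) f"

definition va :: "'a measure \<Rightarrow> (real \<Rightarrow> 'a measure) \<Rightarrow> real \<Rightarrow> (real \<Rightarrow> 'a \<Rightarrow> real) \<Rightarrow> real \<Rightarrow> 'a \<Rightarrow> real" where
  "va M F T X t = cexp M F t (\<lambda>\<omega>. X T \<omega> - X t \<omega>)"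

definition usual_filtration :: "'a measure \<Rightarrow> (real \<Rightarrow> 'a measure) \<Rightarrow> real \<Rightarrow> bool" where
  "usual_filtration M F T \<longleftrightarrow>
     (\<forall>t\<in>{0..T}. subalgebra M (F t)) \<and>
     (\<forall>s t. 0 \<le> s \<longrightarrow> s \<le> t \<longrightarrow> t \<le> T \<longrightarrow> sets (F s) \<subseteq> sets (F t)) \<and>
     (\<forall>t\<in>{0..<T}. sets (F t) = (\<Inter>s\<in>{t<..T}. sets (F s))) \<and>
     (\<forall>N\<in>sets M. measure M N = 0 \<longrightarrow> (\<forall>B. B \<subseteq> N \<longrightarrow> B \<in> sets (F 0)))"

definition stopping_time_on :: "'a measure \<Rightarrow> (real \<Rightarrow> 'a measure) \<Rightarrow> real \<Rightarrow> ('a \<Rightarrow> real) \<Rightarrow> bool" where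
  "stopping_time_on M F T \<sigma> \<longleftrightarrow>
     (\<forall>\<omega>\<in>space M. \<sigma> \<omega> \<in> {0..T}) \<and>
     (\<forall>t\<in>{0..T}. {\<omega>\<in>space M. \<sigma> \<omega> \<le> t} \<in> sets (F t))"

definition stopped_sigma :: "'a measure \<Rightarrow> (real \<Rightarrow> 'a measure) \<Rightarrow> real \<Rightarrow> ('a \<Rightarrow> real) \<Rightarrow> 'a measure" where
  "stopped_sigma M F T \<sigma> = sigma (space M)
     {A \<in> sets M. \<forall>t\<in>{0..T}. A \<inter> {\<omega>\<in>space M. \<sigma> \<omega> \<le> t} \<in> sets (F t)}"

definition adapted :: "'a measure \<Rightarrow> (real \<Rightarrow> 'a measure) \<Rightarrow> real \<Rightarrow> (real \<Rightarrow> 'a \<Rightarrow> real) \<Rightarrow> bool" where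
  "adapted M F T X \<longleftrightarrow> (\<forall>t\<in>{0..T}. X t \<in> borel_measurable (F t))"

definition cadlag_on :: "real \<Rightarrow> (real \<Rightarrow> real) \<Rightarrow> bool" where
  "cadlag_on T f \<longleftrightarrow> (\<forall>t\<in>{0..<T}. (f \<longlongrightarrow> f t) (at_right t)) \<and>
                       (\<forall>t\<in>{0<..T}. \<exists>l. (f \<longlongrightarrow> l) (at_left t))"

definition cadlag_process :: "'a measure \<Rightarrow> real \<Rightarrow> (real \<Rightarrow> 'a \<Rightarrow> real) \<Rightarrow> bool" where
  "cadlag_process M T X \<longleftrightarrow> (\<forall>\<omega>\<in>space M. cadlag_on T (\<lambda>t. X t \<omega>))"

text \<open>standing assumption: integrable enough for the conditional expectations to exist\<close>
definition integrable_at_stopping :: "'a measure \<Rightarrow> (real \<Rightarrow> 'a measure) \<Rightarrow> real \<Rightarrow> (real \<Rightarrow> 'a \<Rightarrow> real) \<Rightarrow> bool" where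
  "integrable_at_stopping M F T X \<longleftrightarrow>
     (\<forall>\<sigma>. stopping_time_on M F T \<sigma> \<longrightarrow> integrable M (\<lambda>\<omega>. X (\<sigma> \<omega>) \<omega>))"

definition regular_process :: "'a measure \<Rightarrow> (real \<Rightarrow> 'a measure) \<Rightarrow> real \<Rightarrow> (real \<Rightarrow> 'a \<Rightarrow> real) \<Rightarrow> bool" where
  "regular_process M F T X \<longleftrightarrow> adapted M F T X \<and> cadlag_process M T X \<and> integrable_at_stopping M F T X"

definition martingale_on :: "'a measure \<Rightarrow> (real \<Rightarrow> 'a measure) \<Rightarrow> real \<Rightarrow> (real \<Rightarrow> 'a \<Rightarrow> real) \<Rightarrow> bool" where
  "martingale_on M F T X \<longleftrightarrow> adapted M F T X \<and> (\<forall>t\<in>{0..T}. integrable M (X t)) \<and>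
     (\<forall>s t. 0 \<le> s \<longrightarrow> s \<le> t \<longrightarrow> t \<le> T \<longrightarrow> (AE \<omega> in M. cexp M F s (X t) \<omega> = X s \<omega>))"

definition local_martingale_on :: "'a measure \<Rightarrow> (real \<Rightarrow> 'a measure) \<Rightarrow> real \<Rightarrow> (real \<Rightarrow> 'a \<Rightarrow> real) \<Rightarrow> bool" where
  "local_martingale_on M F T X \<longleftrightarrow> (\<exists>\<sigma> :: nat \<Rightarrow> 'a \<Rightarrow> real.
     (\<forall>n. stopping_time_on M F T (\<sigma> n)) \<and>
     (\<forall>n. \<forall>\<omega>\<in>space M. \<sigma> n \<omega> \<le> \<sigma> (Suc n) \<omega>) \<and>
     (AE \<omega> in M. \<exists>n. \<sigma> n \<omega> = T) \<and>
     (\<forall>n. martingale_on M F T (\<lambda>t \<omega>. X (min t (\<sigma> n \<omega>)) \<omega>)))"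

definition bounded_variation_on :: "real \<Rightarrow> (real \<Rightarrow> real) \<Rightarrow> bool" where
  "bounded_variation_on T f \<longleftrightarrow> (\<exists>B. \<forall>ts. sorted ts \<longrightarrow> set ts \<subseteq> {0..T} \<longrightarrow>
     (\<Sum>i<length ts - 1. \<bar>f (ts ! Suc i) - f (ts ! i)\<bar>) \<le> B)"

definition semimartingale :: "'a measure \<Rightarrow> (real \<Rightarrow> 'a measure) \<Rightarrow> real \<Rightarrow> (real \<Rightarrow> 'a \<Rightarrow> real) \<Rightarrow> bool" where
  "semimartingale M F T X \<longleftrightarrow> (\<exists>L A.
     local_martingale_on M F T L \<and> cadlag_process M T L \<and>
     adapted M F T A \<and> cadlag_process M T A \<and>
     (\<forall>\<omega>\<in>space M. L 0 \<omega> = 0 \<and> A 0 \<omega> = 0 \<and> bounded_variation_on T (\<lambda>t. A t \<omega>)) \<and>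
     (\<forall>t\<in>{0..T}. \<forall>\<omega>\<in>space M. X t \<omega> = X 0 \<omega> + L t \<omega> + A t \<omega>))"

text \<open>cash flow: optional integrable process with value 0 at time 0 (optionality follows
  from the standing adapted + cadlag assumption)\<close>
definition cash_flow :: "'a measure \<Rightarrow> (real \<Rightarrow> 'a measure) \<Rightarrow> real \<Rightarrow> (real \<Rightarrow> 'a \<Rightarrow> real) \<Rightarrow> bool" where
  "cash_flow M F T Y \<longleftrightarrow> regular_process M F T Y \<and> (\<forall>\<omega>\<in>space M. Y 0 \<omega> = 0)"

definition is_ess_sup :: "'a measure \<Rightarrow> ('a \<Rightarrow> real) set \<Rightarrow> ('a \<Rightarrow> real) \<Rightarrow> bool" where
  "is_ess_sup M S Y \<longleftrightarrow> Y \<in> borel_measurable M \<and>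
     (\<forall>Z\<in>S. AE \<omega> in M. Z \<omega> \<le> Y \<omega>) \<and>
     (\<forall>Y'. Y' \<in> borel_measurable M \<longrightarrow> (\<forall>Z\<in>S. AE \<omega> in M. Z \<omega> \<le> Y' \<omega>) \<longrightarrow>
        (AE \<omega> in M. Y \<omega> \<le> Y' \<omega>))"

definition fair_callable_value :: "'a measure \<Rightarrow> (real \<Rightarrow> 'a measure) \<Rightarrow> real \<Rightarrow> (real \<Rightarrow> 'a \<Rightarrow> real) \<Rightarrow> (real \<Rightarrow> 'a \<Rightarrow> real) \<Rightarrow> bool" where
  "fair_callable_value M F T cY Y \<longleftrightarrow> (\<forall>t\<in>{0..T}. is_ess_sup M
     {cexp M F t (\<lambda>\<omega>. cY (\<tau> \<omega>) \<omega> - cY t \<omega>) | \<tau>. stopping_time_on M F T \<tau> \<and> (\<forall>\<omega>\<in>space M. t \<le> \<tau> \<omega>)}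
     (Y t))"

definition predictable_sets :: "'a measure \<Rightarrow> (real \<Rightarrow> 'a measure) \<Rightarrow> real \<Rightarrow> (real \<times> 'a) set set" where
  "predictable_sets M F T = sigma_sets ({0..T} \<times> space M)
     ({{0} \<times> A | A. A \<in> sets (F 0)} \<union>
      {{s<..t} \<times> A | s t A. 0 \<le> s \<and> s < t \<and> t \<le> T \<and> A \<in> sets (F s)})"

definition predictable :: "'a measure \<Rightarrow> (real \<Rightarrow> 'a measure) \<Rightarrow> real \<Rightarrow> (real \<Rightarrow> 'a \<Rightarrow> real) \<Rightarrow> bool" where
  "predictable M F T X \<longleftrightarrow> (\<forall>B\<in>sets borel.
     {(t, \<omega>) \<in> {0..T} \<times> space M. X t \<omega> \<in> B} \<in> predictable_sets M F T)"

definition is_drift :: "'a measure \<Rightarrow> (real \<Rightarrow> 'a measure) \<Rightarrow> real \<Rightarrow> (real \<Rightarrow> 'a \<Rightarrow> real) \<Rightarrow> (real \<Rightarrow> 'a \<Rightarrow> real) \<Rightarrow> bool" where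
  "is_drift M F T Y K \<longleftrightarrow>
     (\<forall>\<omega>\<in>space M. mono_on {0..T} (\<lambda>t. K t \<omega>) \<and> K 0 \<omega> = 0) \<and>
     (\<forall>t\<in>{0..T}. integrable M (K t)) \<and> predictable M F T K \<and> cadlag_process M T K \<and>
     martingale_on M F T (\<lambda>t \<omega>. Y t \<omega> + K t \<omega>)"

definition stopped :: "(real \<Rightarrow> 'a \<Rightarrow> real) \<Rightarrow> ('a \<Rightarrow> real) \<Rightarrow> real \<Rightarrow> 'a \<Rightarrow> real" where
  "stopped X \<theta> t \<omega> = X (min t (\<theta> \<omega>)) \<omega>"

definition from0 :: "(real \<Rightarrow> 'a \<Rightarrow> real) \<Rightarrow> real \<Rightarrow> 'a \<Rightarrow> real" where
  "from0 X t \<omega> = X t \<omega> - X 0 \<omega>"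

definition ind_before :: "('a \<Rightarrow> real) \<Rightarrow> real \<Rightarrow> 'a \<Rightarrow> real" where
  "ind_before \<sigma> t \<omega> = (if t < \<sigma> \<omega> then 1 else 0)"

definition exit_time :: "('a \<Rightarrow> real) \<Rightarrow> ('a \<Rightarrow> real) \<Rightarrow> ('a \<Rightarrow> real) \<Rightarrow> 'a \<Rightarrow> real" where
  "exit_time \<theta>s \<tau>st \<tau>s \<omega> = (if \<theta>s \<omega> < \<tau>s \<omega> then \<theta>s \<omega> else \<tau>st \<omega>)"

definition nsb_flow :: "(real \<Rightarrow> 'a \<Rightarrow> real) \<Rightarrow> (real \<Rightarrow> 'a \<Rightarrow> real) \<Rightarrow> ('a \<Rightarrow> real) \<Rightarrow> ('a \<Rightarrow> real) \<Rightarrow> real \<Rightarrow> 'a \<Rightarrow> real" where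
  "nsb_flow cPbad cPgood \<tau>s \<theta> t \<omega> =
     stopped cPbad \<tau>s t \<omega>
     + (1 - ind_before \<tau>s t \<omega>) * ind_before \<tau>s (\<theta> \<omega>) \<omega> * (cPbad t \<omega> - cPbad (\<tau>s \<omega>) \<omega>)
     + (1 - ind_before \<tau>s t \<omega>) * (1 - ind_before \<tau>s (\<theta> \<omega>) \<omega>) * (cPgood t \<omega> - cPgood (\<tau>s \<omega>) \<omega>)"

definition pnl_nsb :: "(real \<Rightarrow> 'a \<Rightarrow> real) \<Rightarrow> (real \<Rightarrow> 'a \<Rightarrow> real) \<Rightarrow> (real \<Rightarrow> 'a \<Rightarrow> real) \<Rightarrow>
    (real \<Rightarrow> 'a \<Rightarrow> real) \<Rightarrow> (real \<Rightarrow> 'a \<Rightarrow> real) \<Rightarrow> (real \<Rightarrow> 'a \<Rightarrow> real) \<Rightarrow>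
    (real \<Rightarrow> 'a \<Rightarrow> real) \<Rightarrow> ('a \<Rightarrow> real) \<Rightarrow> ('a \<Rightarrow> real) \<Rightarrow> real \<Rightarrow> 'a \<Rightarrow> real" where
  "pnl_nsb cQ q Q cPnsb p Pnsb h \<tau>s \<theta> t \<omega> =
     from0 (stopped (\<lambda>t \<omega>. cQ t \<omega> + ind_before \<tau>s t \<omega> * q t \<omega> + (1 - ind_before \<tau>s t \<omega>) * Q t \<omega>) \<theta>) t \<omega>
     - from0 (stopped (\<lambda>t \<omega>. cPnsb t \<omega> + ind_before \<tau>s t \<omega> * p t \<omega> + (1 - ind_before \<tau>s t \<omega>) * Pnsb t \<omega>) \<theta>) t \<omega>
     - h t \<omega>
     - (1 - ind_before \<theta> t \<omega>) *
         (ind_before \<tau>s (\<theta> \<omega>) \<omega> * q (\<theta> \<omega>) \<omega> + (1 - ind_before \<tau>s (\<theta> \<omega>) \<omega>) * Q (\<theta> \<omega>) \<omega>)"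

end

theory Submission
  imports Defs
begin

text \<open>All four identities are pathwise algebra once two facts are available. First, the trader's
  hedge price \<open>p\<close> equals \<open>Pbad\<close> a.s. simultaneously at all times before the switch (both are
  right-continuous), and at the exit time the asset is called at zero value; this gives (i).
  Second, taking conditional expectations of the PnL increment, the martingales
  \<open>cQ + Q + K\<close> and \<open>cPnsb + Pnsb\<close> (the latter closed by \<open>Pnsb T = 0\<close>) must be sampled at the
  exit time \<open>\<theta>\<close>: this is the optional sampling theorem \<open>E_t[X \<theta>] = X (min t \<theta>)\<close> for
  right-continuous closed martingales, which gives (ii) and (iii); (iv) combines (i) and (ii).
  Optional sampling is proved by approximating \<open>\<theta>\<close> from above by dyadic stopping times, for
  which it is a finite sum, and passing to the limit by uniform integrability of the sampled
  values.\<close>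

section \<open>Filtrations, conditional expectations and stopping times\<close>

locale filtered_prob_space = prob_space M for M :: "'a measure" +
  fixes F :: "real \<Rightarrow> 'a measure" and T :: real
  assumes subalgebra_F: "t \<in> {0..T} \<Longrightarrow> subalgebra M (F t)"
    and sets_F_mono: "0 \<le> s \<Longrightarrow> s \<le> t \<Longrightarrow> t \<le> T \<Longrightarrow> sets (F s) \<subseteq> sets (F t)"
    and T_pos: "0 < T"
begin

lemma T_nonneg [simp]: "0 \<le> T"
  using T_pos by simp

lemma horizon_endpoints [simp]: "0 \<in> {0..T}" "T \<in> {0..T}"
  by auto

lemma space_F [simp]: "t \<in> {0..T} \<Longrightarrow> space (F t) = space M"
  using subalgebra_F unfolding subalgebra_def by auto

lemma sets_F_sets_M: "t \<in> {0..T} \<Longrightarrow> A \<in> sets (F t) \<Longrightarrow> A \<in> sets M"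
  using subalgebra_F unfolding subalgebra_def by auto

lemma measurable_F_mono:
  "f \<in> borel_measurable (F s) \<Longrightarrow> 0 \<le> s \<Longrightarrow> s \<le> t \<Longrightarrow> t \<le> T \<Longrightarrow> f \<in> borel_measurable (F t)"
  using measurable_from_subalg[of "F t" "F s"] sets_F_mono[of s t] unfolding subalgebra_def by auto

lemma measurable_F_measurable_M: "f \<in> borel_measurable (F t) \<Longrightarrow> t \<in> {0..T} \<Longrightarrow> f \<in> borel_measurable M"
  using measurable_from_subalg[OF subalgebra_F] by blast

lemma sigma_finite_subalgebra_F: "t \<in> {0..T} \<Longrightarrow> sigma_finite_subalgebra M (F t)"
  by (rule finite_measure_subalgebra_is_sigma_finite)
    (simp add: finite_measure_subalgebra_def finite_measure_subalgebra_axioms_def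
      subalgebra_F finite_measure_axioms)

lemma cexp_add: "t \<in> {0..T} \<Longrightarrow> integrable M f \<Longrightarrow> integrable M g \<Longrightarrow>
    AE x in M. cexp M F t (\<lambda>x. f x + g x) x = cexp M F t f x + cexp M F t g x"
  unfolding cexp_def using sigma_finite_subalgebra.real_cond_exp_add[OF sigma_finite_subalgebra_F] by blast

lemma cexp_diff: "t \<in> {0..T} \<Longrightarrow> integrable M f \<Longrightarrow> integrable M g \<Longrightarrow>
    AE x in M. cexp M F t (\<lambda>x. f x - g x) x = cexp M F t f x - cexp M F t g x"
  unfolding cexp_def using sigma_finite_subalgebra.real_cond_exp_diff[OF sigma_finite_subalgebra_F] by blast

lemma cexp_cmult: "t \<in> {0..T} \<Longrightarrow> integrable M f \<Longrightarrow>
    AE x in M. cexp M F t (\<lambda>x. c * f x) x = c * cexp M F t f x"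
  unfolding cexp_def using sigma_finite_subalgebra.real_cond_exp_cmult[OF sigma_finite_subalgebra_F] by blast

lemma cexp_F_meas: "t \<in> {0..T} \<Longrightarrow> integrable M f \<Longrightarrow> f \<in> borel_measurable (F t) \<Longrightarrow>
    AE x in M. cexp M F t f x = f x"
  unfolding cexp_def using sigma_finite_subalgebra.real_cond_exp_F_meas[OF sigma_finite_subalgebra_F] by blast

lemma cexp_add_F_meas:
  assumes t: "t \<in> {0..T}" and f: "integrable M f" and g: "integrable M g" "g \<in> borel_measurable (F t)"
  shows "AE x in M. cexp M F t (\<lambda>x. f x + g x) x = cexp M F t f x + g x"
  using cexp_add[OF t f g(1)] cexp_F_meas[OF t g] by eventually_elim simp

lemma cexp_cong: "t \<in> {0..T} \<Longrightarrow> AE x in M. f x = g x \<Longrightarrow>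
    f \<in> borel_measurable M \<Longrightarrow> g \<in> borel_measurable M \<Longrightarrow>
    AE x in M. cexp M F t f x = cexp M F t g x"
  unfolding cexp_def using sigma_finite_subalgebra.real_cond_exp_cong[OF sigma_finite_subalgebra_F] by blast

lemma cexp_mono: "t \<in> {0..T} \<Longrightarrow> AE x in M. f x \<le> g x \<Longrightarrow> integrable M f \<Longrightarrow> integrable M g \<Longrightarrow>
    AE x in M. cexp M F t f x \<le> cexp M F t g x"
  unfolding cexp_def using sigma_finite_subalgebra.real_cond_exp_mono[OF sigma_finite_subalgebra_F] by blast

lemma integrable_cexp: "t \<in> {0..T} \<Longrightarrow> integrable M f \<Longrightarrow> integrable M (cexp M F t f)"
  unfolding cexp_def using sigma_finite_subalgebra.real_cond_exp_int[OF sigma_finite_subalgebra_F] by blast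

lemma cexp_measurable: "cexp M F t f \<in> borel_measurable (F t)"
  unfolding cexp_def by simp

lemma integral_indicator_cexp: "t \<in> {0..T} \<Longrightarrow> integrable M f \<Longrightarrow> A \<in> sets (F t) \<Longrightarrow>
    (\<integral>x. indicator A x * cexp M F t f x \<partial>M) = (\<integral>x. indicator A x * f x \<partial>M)"
  using sigma_finite_subalgebra.real_cond_exp_intA[OF sigma_finite_subalgebra_F, of t f A]
  unfolding cexp_def set_lebesgue_integral_def by simp

lemma cexp_charact: "t \<in> {0..T} \<Longrightarrow> integrable M f \<Longrightarrow> integrable M g \<Longrightarrow> g \<in> borel_measurable (F t) \<Longrightarrow>
    (\<And>A. A \<in> sets (F t) \<Longrightarrow> (\<integral>x. indicator A x * f x \<partial>M) = (\<integral>x. indicator A x * g x \<partial>M)) \<Longrightarrow>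
    AE x in M. cexp M F t f x = g x"
  unfolding cexp_def
  by (rule sigma_finite_subalgebra.real_cond_exp_charact[OF sigma_finite_subalgebra_F])
    (auto simp: set_lebesgue_integral_def)

lemma stopping_time_range:
  "stopping_time_on M F T \<rho> \<Longrightarrow> \<omega> \<in> space M \<Longrightarrow> 0 \<le> \<rho> \<omega> \<and> \<rho> \<omega> \<le> T"
  unfolding stopping_time_on_def by auto

lemma stopping_time_le_sets:
  assumes st: "stopping_time_on M F T \<rho>" and u: "u \<in> {0..T}" and su: "s \<le> u"
  shows "{\<omega>\<in>space M. \<rho> \<omega> \<le> s} \<in> sets (F u)"
proof (cases "s < 0")
  case True
  then have "{\<omega>\<in>space M. \<rho> \<omega> \<le> s} = {}" using stopping_time_range[OF st] by force
  then show ?thesis by (simp only: sets.empty_sets)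
next
  case False
  then have "{\<omega>\<in>space M. \<rho> \<omega> \<le> s} \<in> sets (F s)"
    using st su u unfolding stopping_time_on_def by auto
  then show ?thesis using sets_F_mono[of s u] False su u by auto
qed

lemma measurable_min_stopping_time:
  assumes st: "stopping_time_on M F T \<rho>" and t: "t \<in> {0..T}"
  shows "(\<lambda>\<omega>. min t (\<rho> \<omega>)) \<in> borel_measurable (F t)"
proof (rule borel_measurable_iff_le[THEN iffD2], intro allI)
  fix a
  show "{\<omega> \<in> space (F t). min t (\<rho> \<omega>) \<le> a} \<in> sets (F t)"
  proof (cases "t \<le> a")
    case True
    then have "{\<omega> \<in> space (F t). min t (\<rho> \<omega>) \<le> a} = space (F t)" by auto
    then show ?thesis by simp
  next
    case False
    then have "{\<omega> \<in> space (F t). min t (\<rho> \<omega>) \<le> a} = {\<omega>\<in>space M. \<rho> \<omega> \<le> a}" using t by auto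
    then show ?thesis using stopping_time_le_sets[OF st t, of a] False by simp
  qed
qed

lemma stopping_time_measurable: "stopping_time_on M F T \<rho> \<Longrightarrow> \<rho> \<in> borel_measurable M"
  using measurable_F_measurable_M[OF measurable_min_stopping_time, of \<rho> T]
  by (rule measurable_cong[THEN iffD1, rotated]) (use T_pos in \<open>auto dest: stopping_time_range\<close>)

lemma stopping_time_const: "t \<in> {0..T} \<Longrightarrow> stopping_time_on M F T (\<lambda>_. t)"
  unfolding stopping_time_on_def
proof safe
  fix s assume "s \<in> {0..T}"
  then show "{\<omega> \<in> space M. t \<le> s} \<in> sets (F s)"
    by (cases "t \<le> s") (simp_all flip: space_F)
qed

lemma stopping_time_min:
  assumes \<sigma>: "stopping_time_on M F T \<sigma>" and \<tau>: "stopping_time_on M F T \<tau>"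
  shows "stopping_time_on M F T (\<lambda>\<omega>. min (\<sigma> \<omega>) (\<tau> \<omega>))"
  unfolding stopping_time_on_def
proof safe
  fix \<omega> assume "\<omega> \<in> space M"
  then show "min (\<sigma> \<omega>) (\<tau> \<omega>) \<in> {0..T}"
    using stopping_time_range[OF \<sigma>] stopping_time_range[OF \<tau>] by (auto simp: min_def)
next
  fix s assume s: "s \<in> {0..T}"
  have "{\<omega> \<in> space M. min (\<sigma> \<omega>) (\<tau> \<omega>) \<le> s} = {\<omega> \<in> space M. \<sigma> \<omega> \<le> s} \<union> {\<omega> \<in> space M. \<tau> \<omega> \<le> s}"
    by auto
  then show "{\<omega> \<in> space M. min (\<sigma> \<omega>) (\<tau> \<omega>) \<le> s} \<in> sets (F s)"
    using stopping_time_le_sets[OF \<sigma> s order_refl] stopping_time_le_sets[OF \<tau> s order_refl] by simp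
qed

lemma stopping_time_min_const:
  "stopping_time_on M F T \<rho> \<Longrightarrow> t \<in> {0..T} \<Longrightarrow> stopping_time_on M F T (\<lambda>\<omega>. min t (\<rho> \<omega>))"
  using stopping_time_min[OF stopping_time_const] by blast

lemma exit_time_stopping_time:
  assumes \<theta>star: "stopping_time_on M F T \<theta>star" and \<tau>s: "stopping_time_on M F T \<tau>s"
    and \<tau>star: "stopping_time_on M F T \<tau>star"
    and order: "\<And>\<omega>. \<omega> \<in> space M \<Longrightarrow> \<theta>star \<omega> \<le> \<tau>s \<omega> \<and> \<tau>s \<omega> \<le> \<tau>star \<omega>"
  shows "stopping_time_on M F T (exit_time \<theta>star \<tau>star \<tau>s)"
  unfolding stopping_time_on_def
proof safe
  fix \<omega> assume "\<omega> \<in> space M"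
  then show "exit_time \<theta>star \<tau>star \<tau>s \<omega> \<in> {0..T}"
    unfolding exit_time_def using stopping_time_range[OF \<theta>star] stopping_time_range[OF \<tau>star] by auto
next
  fix s assume s: "s \<in> {0..T}"
  \<comment> \<open>\<open>E\<close> is the event that the switch has happened by time \<open>s\<close> without an earlier call.\<close>
  define E where "E = {\<omega>\<in>space M. \<tau>s \<omega> \<le> s \<and> min s (\<tau>s \<omega>) \<le> min s (\<theta>star \<omega>)}"
  have [measurable]: "(\<lambda>\<omega>. min s (\<tau>s \<omega>)) \<in> borel_measurable (F s)" "(\<lambda>\<omega>. min s (\<theta>star \<omega>)) \<in> borel_measurable (F s)"
    using measurable_min_stopping_time[OF \<tau>s s] measurable_min_stopping_time[OF \<theta>star s] by auto
  have "{\<omega>\<in>space (F s). min s (\<tau>s \<omega>) \<le> min s (\<theta>star \<omega>)} \<in> sets (F s)" by measurable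
  moreover have "E = {\<omega>\<in>space M. \<tau>s \<omega> \<le> s} \<inter> {\<omega>\<in>space (F s). min s (\<tau>s \<omega>) \<le> min s (\<theta>star \<omega>)}"
    unfolding E_def using s by auto
  ultimately have E: "E \<in> sets (F s)"
    using stopping_time_le_sets[OF \<tau>s s order_refl] by simp
  have "{\<omega> \<in> space M. exit_time \<theta>star \<tau>star \<tau>s \<omega> \<le> s}
      = ({\<omega>\<in>space M. \<theta>star \<omega> \<le> s} - E) \<union> ({\<omega>\<in>space M. \<tau>star \<omega> \<le> s} \<inter> E)"
    using order unfolding E_def exit_time_def by (auto simp: min_def) (smt (verit))+
  then show "{\<omega> \<in> space M. exit_time \<theta>star \<tau>star \<tau>s \<omega> \<le> s} \<in> sets (F s)"
    using stopping_time_le_sets[OF \<theta>star s order_refl] stopping_time_le_sets[OF \<tau>star s order_refl] E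
    by simp
qed

end

section \<open>Right-continuous processes\<close>

definition right_continuous_process :: "'a measure \<Rightarrow> real \<Rightarrow> (real \<Rightarrow> 'a \<Rightarrow> real) \<Rightarrow> bool" where
  "right_continuous_process M T X \<longleftrightarrow>
     (\<forall>\<omega>\<in>space M. \<forall>s\<in>{0..<T}. ((\<lambda>u. X u \<omega>) \<longlongrightarrow> X s \<omega>) (at_right s))"

lemma cadlag_process_right_continuous: "cadlag_process M T X \<Longrightarrow> right_continuous_process M T X"
  unfolding cadlag_process_def cadlag_on_def right_continuous_process_def by blast

lemma regular_process_right_continuous: "regular_process M F T X \<Longrightarrow> right_continuous_process M T X"
  unfolding regular_process_def using cadlag_process_right_continuous by blast

lemma right_continuous_seq_tendsto:
  fixes f :: "real \<Rightarrow> real"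
  assumes rc: "(f \<longlongrightarrow> f x) (at_right x)" and s: "s \<longlonglongrightarrow> x" and ge: "\<And>n. x \<le> s n"
  shows "(\<lambda>n. f (s n)) \<longlonglongrightarrow> f x"
proof (rule tendstoI)
  fix e :: real assume e: "0 < e"
  obtain b where b: "b > x" "\<And>y. x < y \<Longrightarrow> y < b \<Longrightarrow> dist (f y) (f x) < e"
    using tendstoD[OF rc e] unfolding eventually_at_right_field by auto
  have "eventually (\<lambda>n. s n < b) sequentially" using s b(1) by (rule order_tendstoD)
  then show "eventually (\<lambda>n. dist (f (s n)) (f x) < e) sequentially"
  proof eventually_elim
    case (elim n)
    show ?case
    proof (cases "s n = x")
      case False
      then show ?thesis using ge[of n] b(2) elim by simp
    qed (use e in simp)
  qed
qed

lemma right_continuous_add: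
  assumes "right_continuous_process M T X" "right_continuous_process M T Y"
  shows "right_continuous_process M T (\<lambda>s \<omega>. X s \<omega> + Y s \<omega>)"
  using assms unfolding right_continuous_process_def by (auto intro: tendsto_add)

lemma ind_before_01: "0 \<le> ind_before \<sigma> s \<omega> \<and> ind_before \<sigma> s \<omega> \<le> 1"
  unfolding ind_before_def by simp

lemma ind_before_right_continuous: "right_continuous_process M T (ind_before \<sigma>)"
  unfolding right_continuous_process_def
proof (intro ballI)
  fix \<omega> s
  have "eventually (\<lambda>u. ind_before \<sigma> u \<omega> = ind_before \<sigma> s \<omega>) (at_right s)"
  proof (cases "s < \<sigma> \<omega>")
    case True
    show ?thesis using eventually_at_right_real[OF True] by eventually_elim (auto simp: ind_before_def)
  next
    case False
    show ?thesis using eventually_at_right_less[of s] by eventually_elim (use False in \<open>auto simp: ind_before_def\<close>)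
  qed
  then show "((\<lambda>u. ind_before \<sigma> u \<omega>) \<longlongrightarrow> ind_before \<sigma> s \<omega>) (at_right s)"
    by (rule tendsto_eventually)
qed

lemma right_continuous_switch:
  assumes "right_continuous_process M T X" "right_continuous_process M T Y" "right_continuous_process M T Z"
  shows "right_continuous_process M T
    (\<lambda>s \<omega>. X s \<omega> + ind_before \<sigma> s \<omega> * Y s \<omega> + (1 - ind_before \<sigma> s \<omega>) * Z s \<omega>)"
proof -
  have "\<forall>\<omega>\<in>space M. \<forall>s\<in>{0..<T}. ((\<lambda>u. X u \<omega>) \<longlongrightarrow> X s \<omega>) (at_right s) \<and>
      ((\<lambda>u. Y u \<omega>) \<longlongrightarrow> Y s \<omega>) (at_right s) \<and> ((\<lambda>u. Z u \<omega>) \<longlongrightarrow> Z s \<omega>) (at_right s) \<and>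
      ((\<lambda>u. ind_before \<sigma> u \<omega>) \<longlongrightarrow> ind_before \<sigma> s \<omega>) (at_right s)"
    using assms ind_before_right_continuous[of M T \<sigma>] unfolding right_continuous_process_def by blast
  then show ?thesis
    unfolding right_continuous_process_def by (auto intro!: tendsto_intros)
qed

text \<open>It suffices to compare the processes at the countably many rational times and to approach
  every other time from the right.\<close>

lemma right_continuous_AE_eq_before:
  fixes X Y :: "real \<Rightarrow> 'a \<Rightarrow> real"
  assumes X: "right_continuous_process M T X" and Y: "right_continuous_process M T Y"
    and \<tau>: "\<And>\<omega>. \<omega> \<in> space M \<Longrightarrow> \<tau> \<omega> \<le> T"
    and eq: "\<And>t. t \<in> {0..T} \<Longrightarrow> AE \<omega> in M. t < \<tau> \<omega> \<longrightarrow> X t \<omega> = Y t \<omega>"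
  shows "AE \<omega> in M. \<forall>s\<in>{0..T}. s < \<tau> \<omega> \<longrightarrow> X s \<omega> = Y s \<omega>"
proof -
  have "countable (\<rat> \<inter> {0..T})" by (rule countable_Int1[OF countable_rat])
  then have "AE \<omega> in M. \<forall>r\<in>\<rat> \<inter> {0..T}. r < \<tau> \<omega> \<longrightarrow> X r \<omega> = Y r \<omega>"
    using eq by (subst AE_ball_countable) auto
  then show ?thesis
    using AE_space
  proof eventually_elim
    case (elim \<omega>)
    show ?case
    proof (intro ballI impI)
      fix s assume s: "s \<in> {0..T}" "s < \<tau> \<omega>"
      then have sT: "s \<in> {0..<T}" using \<tau>[OF elim(2)] by auto
      have "\<exists>r\<in>\<rat>. s < r \<and> r < min (\<tau> \<omega>) (s + 1 / real (Suc n))" for n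
        by (rule Rats_dense_in_real) (use s in simp)
      then obtain r where r: "\<And>n. r n \<in> \<rat> \<and> s < r n \<and> r n < min (\<tau> \<omega>) (s + 1 / real (Suc n))"
        by metis
      have r_ge: "s \<le> r n" for n using r[of n] by simp
      have "(\<lambda>n. s + 1 / real (Suc n)) \<longlonglongrightarrow> s + 0"
        by (intro tendsto_add tendsto_const LIMSEQ_Suc[OF lim_const_over_n])
      then have r_lim: "r \<longlonglongrightarrow> s"
      proof (intro tendsto_sandwich[of "\<lambda>_. s" r sequentially "\<lambda>n. s + 1 / real (Suc n)"])
        show "eventually (\<lambda>n. r n \<le> s + 1 / real (Suc n)) sequentially"
          using r by (intro always_eventually) (auto intro: less_imp_le)
      qed (use r_ge in auto)
      have "X (r n) \<omega> = Y (r n) \<omega>" for n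
        using elim(1) r[of n] s \<tau>[OF elim(2)] by auto
      moreover have "(\<lambda>n. X (r n) \<omega>) \<longlonglongrightarrow> X s \<omega>" "(\<lambda>n. Y (r n) \<omega>) \<longlonglongrightarrow> Y s \<omega>"
        using X Y elim(2) sT unfolding right_continuous_process_def
        by (auto intro!: right_continuous_seq_tendsto[OF _ r_lim r_ge])
      ultimately have "(\<lambda>n. X (r n) \<omega>) \<longlonglongrightarrow> X s \<omega>" "(\<lambda>n. X (r n) \<omega>) \<longlonglongrightarrow> Y s \<omega>"
        by simp_all
      then show "X s \<omega> = Y s \<omega>" by (rule LIMSEQ_unique)
    qed
  qed
qed

lemma integrable_convex_combination:
  fixes f g j :: "'a \<Rightarrow> real"
  assumes f: "integrable M f" and g: "integrable M g" and j: "j \<in> borel_measurable M"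
    and j01: "\<And>\<omega>. 0 \<le> j \<omega> \<and> j \<omega> \<le> 1"
  shows "integrable M (\<lambda>\<omega>. j \<omega> * f \<omega> + (1 - j \<omega>) * g \<omega>)"
proof (rule Bochner_Integration.integrable_bound[where f="\<lambda>\<omega>. \<bar>f \<omega>\<bar> + \<bar>g \<omega>\<bar>"])
  show "integrable M (\<lambda>\<omega>. \<bar>f \<omega>\<bar> + \<bar>g \<omega>\<bar>)" using f g by simp
  show "(\<lambda>\<omega>. j \<omega> * f \<omega> + (1 - j \<omega>) * g \<omega>) \<in> borel_measurable M" using f g j by measurable
  have "\<bar>j \<omega> * f \<omega> + (1 - j \<omega>) * g \<omega>\<bar> \<le> \<bar>f \<omega>\<bar> + \<bar>g \<omega>\<bar>" for \<omega>
  proof -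
    have "\<bar>j \<omega> * f \<omega>\<bar> \<le> \<bar>f \<omega>\<bar>" "\<bar>(1 - j \<omega>) * g \<omega>\<bar> \<le> \<bar>g \<omega>\<bar>"
      using j01[of \<omega>] by (auto simp: abs_mult intro!: mult_left_le_one_le)
    then show ?thesis by linarith
  qed
  then show "AE \<omega> in M. norm (j \<omega> * f \<omega> + (1 - j \<omega>) * g \<omega>) \<le> norm (\<bar>f \<omega>\<bar> + \<bar>g \<omega>\<bar>)" by simp
qed

lemma regular_process_adapted: "regular_process M F T X \<Longrightarrow> adapted M F T X"
  unfolding regular_process_def by blast

lemma regular_process_integrable_at_stopping: "regular_process M F T X \<Longrightarrow> integrable_at_stopping M F T X"
  unfolding regular_process_def by blast

lemma integrable_at_stopping_integrable:
  "integrable_at_stopping M F T X \<Longrightarrow> stopping_time_on M F T \<sigma> \<Longrightarrow> integrable M (\<lambda>\<omega>. X (\<sigma> \<omega>) \<omega>)"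
  unfolding integrable_at_stopping_def by blast

lemma regular_process_integrable_stopped:
  "regular_process M F T X \<Longrightarrow> stopping_time_on M F T \<sigma> \<Longrightarrow> integrable M (\<lambda>\<omega>. X (\<sigma> \<omega>) \<omega>)"
  unfolding regular_process_def integrable_at_stopping_def by blast

lemma integrable_at_stopping_add:
  "integrable_at_stopping M F T X \<Longrightarrow> integrable_at_stopping M F T Y \<Longrightarrow>
    integrable_at_stopping M F T (\<lambda>s \<omega>. X s \<omega> + Y s \<omega>)"
  unfolding integrable_at_stopping_def by auto

lemma adapted_add:
  assumes "adapted M F T X" "adapted M F T Y"
  shows "adapted M F T (\<lambda>s \<omega>. X s \<omega> + Y s \<omega>)"
  using assms unfolding adapted_def by (auto intro: borel_measurable_add)

context filtered_prob_space
begin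

lemma integrable_at_stopping_integrable_const:
  "integrable_at_stopping M F T X \<Longrightarrow> t \<in> {0..T} \<Longrightarrow> integrable M (X t)"
  using integrable_at_stopping_integrable[OF _ stopping_time_const] by simp

lemma ind_before_adapted:
  assumes \<sigma>: "stopping_time_on M F T \<sigma>"
  shows "adapted M F T (ind_before \<sigma>)"
  unfolding adapted_def
proof
  fix s assume s: "s \<in> {0..T}"
  have [measurable]: "Measurable.pred (F s) (\<lambda>\<omega>. \<sigma> \<omega> \<le> s)"
    unfolding pred_def using stopping_time_le_sets[OF \<sigma> s order_refl] s by simp
  have "(\<lambda>\<omega>. if \<not> \<sigma> \<omega> \<le> s then 1 else 0 :: real) \<in> borel_measurable (F s)" by measurable
  moreover have "ind_before \<sigma> s = (\<lambda>\<omega>. if \<not> \<sigma> \<omega> \<le> s then 1 else 0)"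
    by (simp add: fun_eq_iff ind_before_def not_le)
  ultimately show "ind_before \<sigma> s \<in> borel_measurable (F s)" by simp
qed

lemma adapted_switch:
  assumes "adapted M F T X" "adapted M F T Y" "adapted M F T Z" and \<sigma>: "stopping_time_on M F T \<sigma>"
  shows "adapted M F T (\<lambda>s \<omega>. X s \<omega> + ind_before \<sigma> s \<omega> * Y s \<omega> + (1 - ind_before \<sigma> s \<omega>) * Z s \<omega>)"
  unfolding adapted_def
proof
  fix s assume "s \<in> {0..T}"
  then have [measurable]: "X s \<in> borel_measurable (F s)" "Y s \<in> borel_measurable (F s)"
    "Z s \<in> borel_measurable (F s)" "ind_before \<sigma> s \<in> borel_measurable (F s)"
    using assms ind_before_adapted[OF \<sigma>] unfolding adapted_def by auto
  show "(\<lambda>\<omega>. X s \<omega> + ind_before \<sigma> s \<omega> * Y s \<omega> + (1 - ind_before \<sigma> s \<omega>) * Z s \<omega>) \<in> borel_measurable (F s)"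
    by measurable
qed

lemma integrable_switch:
  assumes "integrable M (\<lambda>\<omega>. X (\<rho> \<omega>) \<omega>)" "integrable M (\<lambda>\<omega>. Y (\<rho> \<omega>) \<omega>)" "integrable M (\<lambda>\<omega>. Z (\<rho> \<omega>) \<omega>)"
    and \<rho>: "stopping_time_on M F T \<rho>" and \<sigma>: "stopping_time_on M F T \<sigma>"
  shows "integrable M (\<lambda>\<omega>. X (\<rho> \<omega>) \<omega> + ind_before \<sigma> (\<rho> \<omega>) \<omega> * Y (\<rho> \<omega>) \<omega>
           + (1 - ind_before \<sigma> (\<rho> \<omega>) \<omega>) * Z (\<rho> \<omega>) \<omega>)"
proof -
  have [measurable]: "\<rho> \<in> borel_measurable M" "\<sigma> \<in> borel_measurable M"
    using stopping_time_measurable[OF \<rho>] stopping_time_measurable[OF \<sigma>] by auto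
  have "(\<lambda>\<omega>. ind_before \<sigma> (\<rho> \<omega>) \<omega>) \<in> borel_measurable M" unfolding ind_before_def by measurable
  then have "integrable M (\<lambda>\<omega>. ind_before \<sigma> (\<rho> \<omega>) \<omega> * Y (\<rho> \<omega>) \<omega> + (1 - ind_before \<sigma> (\<rho> \<omega>) \<omega>) * Z (\<rho> \<omega>) \<omega>)"
    using assms(2,3) ind_before_01 by (intro integrable_convex_combination)
  then show ?thesis using assms(1) by (simp add: add.assoc)
qed

end

section \<open>Dyadic approximation of stopping times\<close>

definition dyadic_ceiling :: "real \<Rightarrow> nat \<Rightarrow> real \<Rightarrow> real" where
  "dyadic_ceiling t n x = t * of_int \<lceil>2^n * x / t\<rceil> / 2^n"

definition dyadic_grid :: "real \<Rightarrow> nat \<Rightarrow> real set" where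
  "dyadic_grid t n = (\<lambda>k. t * real k / 2^n) ` {0..2^n}"

lemma dyadic_ceiling_ge: "0 < t \<Longrightarrow> x \<le> dyadic_ceiling t n x"
proof -
  assume t: "0 < t"
  have "2^n * x / t \<le> of_int \<lceil>2^n * x / t\<rceil>" by (rule le_of_int_ceiling)
  then have "2^n * x \<le> of_int \<lceil>2^n * x / t\<rceil> * t" by (simp only: pos_divide_le_eq[OF t])
  then show ?thesis unfolding dyadic_ceiling_def by (simp add: field_simps)
qed

lemma dyadic_ceiling_le: "0 < t \<Longrightarrow> dyadic_ceiling t n x \<le> x + t / 2^n"
proof -
  assume t: "0 < t"
  have "of_int \<lceil>2^n * x / t\<rceil> \<le> 2^n * x / t + 1" by linarith
  then have "t * of_int \<lceil>2^n * x / t\<rceil> \<le> 2^n * x + t" using t by (simp add: field_simps)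
  then show ?thesis unfolding dyadic_ceiling_def by (simp add: field_simps)
qed

lemma dyadic_ceiling_self [simp]: "dyadic_ceiling t n t = t"
  unfolding dyadic_ceiling_def by (cases "t = 0") simp_all

lemma dyadic_ceiling_LIMSEQ: "0 < t \<Longrightarrow> (\<lambda>n. dyadic_ceiling t n x) \<longlonglongrightarrow> x"
proof (rule tendsto_sandwich[of "\<lambda>_. x" _ _ "\<lambda>n. x + t / 2^n"])
  assume t: "0 < t"
  have "(\<lambda>n. x + t / 2^n) \<longlonglongrightarrow> x + 0"
    by (intro tendsto_add tendsto_const tendsto_divide_0[OF tendsto_const]
        filterlim_realpow_sequentially_gt1) simp
  then show "(\<lambda>n. x + t / 2^n) \<longlonglongrightarrow> x" by simp
qed (simp_all add: dyadic_ceiling_ge dyadic_ceiling_le)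

lemma finite_dyadic_grid [simp]: "finite (dyadic_grid t n)"
  unfolding dyadic_grid_def by simp

lemma dyadic_grid_subset: "0 \<le> t \<Longrightarrow> dyadic_grid t n \<subseteq> {0..t}"
proof
  fix v assume t: "0 \<le> t" and "v \<in> dyadic_grid t n"
  then obtain k where k: "k \<le> 2^n" "v = t * real k / 2^n" unfolding dyadic_grid_def by auto
  have "real k \<le> 2^n" using k(1) by (metis of_nat_le_iff of_nat_numeral of_nat_power)
  then have "t * real k \<le> t * 2^n" using t by (rule mult_left_mono)
  then have "t * real k / 2^n \<le> t * 2^n / 2^n" by (rule divide_right_mono) simp
  then show "v \<in> {0..t}" using k t by simp
qed

lemma dyadic_ceiling_in_grid:
  assumes t: "0 < t" and x: "0 \<le> x" "x \<le> t"
  shows "dyadic_ceiling t n x \<in> dyadic_grid t n"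
proof -
  define c where "c = \<lceil>2^n * x / t\<rceil>"
  have "0 \<le> 2^n * x / t" using t x by simp
  then have c0: "0 \<le> c" unfolding c_def by simp
  have "2^n * x / t \<le> 2^n" using t x by (simp add: field_simps)
  then have "c \<le> 2^n" unfolding c_def by (metis ceiling_le_iff of_int_numeral of_int_power)
  then have "nat c \<in> {0..2^n}" using c0 by (simp add: nat_le_iff)
  moreover have "dyadic_ceiling t n x = t * real (nat c) / 2^n"
    unfolding dyadic_ceiling_def c_def[symmetric] using c0 by simp
  ultimately show ?thesis unfolding dyadic_grid_def by blast
qed

lemma dyadic_ceiling_eq_iff:
  assumes t: "0 < t"
  shows "dyadic_ceiling t n x = t * real k / 2^n \<longleftrightarrow>
         x \<le> t * real k / 2^n \<and> \<not> x \<le> t * (real k - 1) / 2^n"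
proof -
  have "dyadic_ceiling t n x = t * real k / 2^n \<longleftrightarrow> of_int \<lceil>2^n * x / t\<rceil> = real k"
    unfolding dyadic_ceiling_def using t by simp
  also have "\<dots> \<longleftrightarrow> \<lceil>2^n * x / t\<rceil> = int k"
    by (metis of_int_eq_iff of_int_of_nat_eq)
  also have "\<dots> \<longleftrightarrow> real k - 1 < 2^n * x / t \<and> 2^n * x / t \<le> real k"
    by (simp add: ceiling_eq_iff)
  also have "\<dots> \<longleftrightarrow> x \<le> t * real k / 2^n \<and> \<not> x \<le> t * (real k - 1) / 2^n"
  proof -
    have p: "0 < (2::real)^n" by simp
    have "2^n * x / t \<le> real k \<longleftrightarrow> 2^n * x \<le> real k * t" by (rule pos_divide_le_eq[OF t])
    moreover have "x \<le> t * real k / 2^n \<longleftrightarrow> x * 2^n \<le> t * real k" by (rule pos_le_divide_eq[OF p])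
    moreover have "2^n * x / t \<le> real k - 1 \<longleftrightarrow> 2^n * x \<le> (real k - 1) * t"
      by (rule pos_divide_le_eq[OF t])
    moreover have "x \<le> t * (real k - 1) / 2^n \<longleftrightarrow> x * 2^n \<le> t * (real k - 1)"
      by (rule pos_le_divide_eq[OF p])
    moreover have "2^n * x = x * 2^n" "real k * t = t * real k" "(real k - 1) * t = t * (real k - 1)"
      by (simp_all only: mult.commute)
    ultimately show ?thesis by linarith
  qed
  finally show ?thesis .
qed

lemma dyadic_ceiling_sampling_tendsto:
  fixes f :: "real \<Rightarrow> real"
  assumes rc: "\<forall>s\<in>{0..<T}. (f \<longlongrightarrow> f s) (at_right s)"
    and t: "0 < t" "t \<le> T" and x: "0 \<le> x" "x \<le> t"
  shows "(\<lambda>n. f (dyadic_ceiling t n x)) \<longlonglongrightarrow> f x"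
proof (cases "x < T")
  case True
  then have "(f \<longlongrightarrow> f x) (at_right x)" using rc x by simp
  then show ?thesis
    by (rule right_continuous_seq_tendsto[OF _ dyadic_ceiling_LIMSEQ[OF t(1)] dyadic_ceiling_ge[OF t(1)]])
next
  case False
  then have "x = t" using x t by simp
  then show ?thesis by simp
qed

lemma sum_indicator_level_sets:
  assumes "finite G" "\<sigma> \<omega> \<in> G" "\<omega> \<in> space M"
  shows "(\<Sum>v\<in>G. indicator {\<omega>\<in>space M. \<sigma> \<omega> = v} \<omega> * f v \<omega>) = (f (\<sigma> \<omega>) \<omega> :: real)"
proof -
  have "indicator {\<omega>\<in>space M. \<sigma> \<omega> = v} \<omega> * f v \<omega> = (if \<sigma> \<omega> = v then f v \<omega> else 0)" for v
    using assms(3) by (simp add: indicator_def)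
  then show ?thesis using assms(1,2) by (simp add: sum.delta')
qed

context filtered_prob_space
begin

lemma dyadic_level_set_sets:
  assumes \<sigma>: "stopping_time_on M F T \<sigma>" and t: "0 < t" "t \<le> T"
    and v: "v \<in> dyadic_grid t n"
  shows "{\<omega>\<in>space M. dyadic_ceiling t n (\<sigma> \<omega>) = v} \<in> sets (F v)"
proof -
  obtain k where v_def: "v = t * real k / 2^n" using v unfolding dyadic_grid_def by auto
  have v0: "v \<in> {0..T}" using dyadic_grid_subset[of t n] v t by auto
  have "{\<omega>\<in>space M. dyadic_ceiling t n (\<sigma> \<omega>) = v} =
      {\<omega>\<in>space M. \<sigma> \<omega> \<le> v} - {\<omega>\<in>space M. \<sigma> \<omega> \<le> t * (real k - 1) / 2^n}"
    unfolding v_def dyadic_ceiling_eq_iff[OF t(1)] by blast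
  moreover have "t * (real k - 1) / 2^n \<le> v"
    unfolding v_def using t by (intro divide_right_mono mult_left_mono) auto
  ultimately show ?thesis
    using stopping_time_le_sets[OF \<sigma> v0] by (simp add: sets.Diff)
qed

lemma dyadic_sampling_measurable:
  assumes ad: "adapted M F T X" and \<sigma>: "stopping_time_on M F T \<sigma>"
    and t: "0 < t" "t \<le> T" and \<sigma>_le: "\<And>\<omega>. \<omega> \<in> space M \<Longrightarrow> \<sigma> \<omega> \<le> t"
  shows "(\<lambda>\<omega>. X (dyadic_ceiling t n (\<sigma> \<omega>)) \<omega>) \<in> borel_measurable (F t)"
proof -
  define B where "B v = {\<omega>\<in>space M. dyadic_ceiling t n (\<sigma> \<omega>) = v}" for v
  have "X (dyadic_ceiling t n (\<sigma> \<omega>)) \<omega> = (\<Sum>v\<in>dyadic_grid t n. indicator (B v) \<omega> * X v \<omega>)"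
    if "\<omega> \<in> space (F t)" for \<omega>
  proof -
    have \<omega>: "\<omega> \<in> space M" using that t by simp
    then have "dyadic_ceiling t n (\<sigma> \<omega>) \<in> dyadic_grid t n"
      using stopping_time_range[OF \<sigma> \<omega>] \<sigma>_le by (intro dyadic_ceiling_in_grid t) auto
    then show ?thesis unfolding B_def
      by (intro sum_indicator_level_sets[where \<sigma>="\<lambda>\<omega>. dyadic_ceiling t n (\<sigma> \<omega>)" and f=X, symmetric] \<omega>) simp
  qed
  moreover have "(\<lambda>\<omega>. \<Sum>v\<in>dyadic_grid t n. indicator (B v) \<omega> * X v \<omega>) \<in> borel_measurable (F t)"
  proof (intro borel_measurable_sum borel_measurable_times borel_measurable_indicator)
    fix v assume v: "v \<in> dyadic_grid t n"
    then have v0: "0 \<le> v" "v \<le> t" using dyadic_grid_subset[of t n] t by auto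
    show "B v \<in> sets (F t)"
      unfolding B_def using dyadic_level_set_sets[OF \<sigma> t v] sets_F_mono[OF v0 t(2)] by (rule subsetD[rotated])
    have "X v \<in> borel_measurable (F v)" using ad v0 t unfolding adapted_def by simp
    then show "X v \<in> borel_measurable (F t)" by (rule measurable_F_mono[OF _ v0 t(2)])
  qed
  ultimately show ?thesis by (simp cong: measurable_cong)
qed

text \<open>Progressive measurability: the value of an adapted right-continuous process at \<open>min t \<rho>\<close> is
  the pointwise limit of its values at the dyadic approximations of \<open>min t \<rho>\<close> from above.\<close>

lemma stopped_process_measurable:
  assumes ad: "adapted M F T X" and rc: "right_continuous_process M T X"
    and \<rho>: "stopping_time_on M F T \<rho>" and t: "t \<in> {0..T}"
  shows "(\<lambda>\<omega>. X (min t (\<rho> \<omega>)) \<omega>) \<in> borel_measurable (F t)"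
proof (cases "t = 0")
  case True
  have "X (min t (\<rho> \<omega>)) \<omega> = X 0 \<omega>" if "\<omega> \<in> space (F t)" for \<omega>
    using True stopping_time_range[OF \<rho>] that t by simp
  then have "(\<lambda>\<omega>. X (min t (\<rho> \<omega>)) \<omega>) \<in> borel_measurable (F t) \<longleftrightarrow> X 0 \<in> borel_measurable (F t)"
    by (rule measurable_cong)
  then show ?thesis using ad True unfolding adapted_def by simp
next
  case False
  then have t0: "0 < t" and tT: "t \<le> T" using t by auto
  have range: "0 \<le> min t (\<rho> \<omega>) \<and> min t (\<rho> \<omega>) \<le> t" if "\<omega> \<in> space M" for \<omega>
    using stopping_time_range[OF \<rho> that] t by auto
  show ?thesis
  proof (rule borel_measurable_LIMSEQ_real)
    show "(\<lambda>\<omega>. X (dyadic_ceiling t n (min t (\<rho> \<omega>))) \<omega>) \<in> borel_measurable (F t)" for n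
      by (rule dyadic_sampling_measurable[OF ad stopping_time_min_const[OF \<rho> t] t0 tT]) simp
    fix \<omega> assume "\<omega> \<in> space (F t)"
    then have \<omega>: "\<omega> \<in> space M" using t by simp
    show "(\<lambda>n. X (dyadic_ceiling t n (min t (\<rho> \<omega>))) \<omega>) \<longlonglongrightarrow> X (min t (\<rho> \<omega>)) \<omega>"
      using rc \<omega> range[OF \<omega>] unfolding right_continuous_process_def
      by (intro dyadic_ceiling_sampling_tendsto[where f="\<lambda>u. X u \<omega>", OF _ t0 tT]) auto
  qed
qed

end

section \<open>Optional sampling\<close>

lemma integral_indicator_sum:
  fixes f :: "'b \<Rightarrow> 'a \<Rightarrow> real"
  assumes A: "\<And>v. v \<in> G \<Longrightarrow> A v \<in> sets M" and f: "\<And>v. v \<in> G \<Longrightarrow> integrable M (f v)"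
  shows "integrable M (\<lambda>\<omega>. \<Sum>v\<in>G. indicator (A v) \<omega> * f v \<omega>)"
    and "(\<integral>\<omega>. (\<Sum>v\<in>G. indicator (A v) \<omega> * f v \<omega>) \<partial>M) = (\<Sum>v\<in>G. \<integral>\<omega>. indicator (A v) \<omega> * f v \<omega> \<partial>M)"
proof -
  have "integrable M (\<lambda>\<omega>. indicator (A v) \<omega> * f v \<omega>)" if "v \<in> G" for v
    using integrable_mult_indicator[OF A[OF that] f[OF that]] by simp
  then show "integrable M (\<lambda>\<omega>. \<Sum>v\<in>G. indicator (A v) \<omega> * f v \<omega>)"
    and "(\<integral>\<omega>. (\<Sum>v\<in>G. indicator (A v) \<omega> * f v \<omega>) \<partial>M) = (\<Sum>v\<in>G. \<integral>\<omega>. indicator (A v) \<omega> * f v \<omega> \<partial>M)"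
    by (auto intro!: Bochner_Integration.integral_sum)
qed

lemma tail_integral_LIMSEQ_zero:
  fixes f :: "'a \<Rightarrow> real"
  assumes f: "integrable M f"
  shows "(\<lambda>m. \<integral>\<omega>. (if real m \<le> \<bar>f \<omega>\<bar> then \<bar>f \<omega>\<bar> else 0) \<partial>M) \<longlonglongrightarrow> 0"
proof -
  have [measurable]: "f \<in> borel_measurable M" using f by simp
  have "(\<lambda>m. \<integral>\<omega>. (if real m \<le> \<bar>f \<omega>\<bar> then \<bar>f \<omega>\<bar> else 0) \<partial>M) \<longlonglongrightarrow> (\<integral>\<omega>. 0 \<partial>M)"
  proof (rule integral_dominated_convergence[where w="\<lambda>\<omega>. \<bar>f \<omega>\<bar>"])
    show "AE \<omega> in M. (\<lambda>m. if real m \<le> \<bar>f \<omega>\<bar> then \<bar>f \<omega>\<bar> else 0) \<longlonglongrightarrow> 0"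
    proof (rule AE_I2)
      fix \<omega>
      obtain N :: nat where N: "\<bar>f \<omega>\<bar> < real N" using reals_Archimedean2 by blast
      have "eventually (\<lambda>m. (if real m \<le> \<bar>f \<omega>\<bar> then \<bar>f \<omega>\<bar> else 0) = 0) sequentially"
        unfolding eventually_sequentially using N by (intro exI[of _ N]) auto
      then show "(\<lambda>m. if real m \<le> \<bar>f \<omega>\<bar> then \<bar>f \<omega>\<bar> else 0) \<longlonglongrightarrow> 0"
        by (rule tendsto_eventually)
    qed
  qed (use f in auto)
  then show ?thesis by simp
qed

lemma tail_integral_Markov:
  fixes Z \<xi> :: "'a \<Rightarrow> real"
  assumes K: "0 < K" and L: "0 \<le> L" and Z: "integrable M Z" and \<xi>: "integrable M \<xi>"
  shows "(\<integral>\<omega>. (if K \<le> \<bar>Z \<omega>\<bar> then \<bar>\<xi> \<omega>\<bar> else 0) \<partial>M)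
    \<le> (\<integral>\<omega>. (if L \<le> \<bar>\<xi> \<omega>\<bar> then \<bar>\<xi> \<omega>\<bar> else 0) \<partial>M) + L / K * (\<integral>\<omega>. \<bar>Z \<omega>\<bar> \<partial>M)"
proof -
  have [measurable]: "Z \<in> borel_measurable M" "\<xi> \<in> borel_measurable M" using Z \<xi> by auto
  have bound: "(if K \<le> \<bar>Z \<omega>\<bar> then \<bar>\<xi> \<omega>\<bar> else 0) \<le> (if L \<le> \<bar>\<xi> \<omega>\<bar> then \<bar>\<xi> \<omega>\<bar> else 0) + L / K * \<bar>Z \<omega>\<bar>" for \<omega>
  proof -
    have "0 \<le> L / K * \<bar>Z \<omega>\<bar>" using K L by simp
    moreover have "L \<le> L / K * \<bar>Z \<omega>\<bar>" if "K \<le> \<bar>Z \<omega>\<bar>"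
      using mult_left_mono[OF that, of "L / K"] K L by simp
    ultimately show ?thesis by auto
  qed
  have i_tail: "integrable M (\<lambda>\<omega>. if L \<le> \<bar>\<xi> \<omega>\<bar> then \<bar>\<xi> \<omega>\<bar> else 0)"
    by (rule Bochner_Integration.integrable_bound[OF integrable_abs[OF \<xi>]]) auto
  have i_abs: "integrable M (\<lambda>\<omega>. L / K * \<bar>Z \<omega>\<bar>)" using Z by simp
  have "(\<integral>\<omega>. (if K \<le> \<bar>Z \<omega>\<bar> then \<bar>\<xi> \<omega>\<bar> else 0) \<partial>M)
      \<le> (\<integral>\<omega>. (if L \<le> \<bar>\<xi> \<omega>\<bar> then \<bar>\<xi> \<omega>\<bar> else 0) + L / K * \<bar>Z \<omega>\<bar> \<partial>M)"
  proof (rule Bochner_Integration.integral_mono[OF _ Bochner_Integration.integrable_add[OF i_tail i_abs] bound])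
    show "integrable M (\<lambda>\<omega>. if K \<le> \<bar>Z \<omega>\<bar> then \<bar>\<xi> \<omega>\<bar> else 0)"
      by (rule Bochner_Integration.integrable_bound[OF integrable_abs[OF \<xi>]]) auto
  qed
  also have "\<dots> = (\<integral>\<omega>. (if L \<le> \<bar>\<xi> \<omega>\<bar> then \<bar>\<xi> \<omega>\<bar> else 0) \<partial>M) + L / K * (\<integral>\<omega>. \<bar>Z \<omega>\<bar> \<partial>M)"
    using i_tail i_abs by simp
  finally show ?thesis .
qed

context finite_measure
begin

lemma integral_truncation_error:
  fixes W :: "'a \<Rightarrow> real"
  assumes K: "0 < K" and W: "integrable M W"
  shows "\<bar>(\<integral>\<omega>. W \<omega> \<partial>M) - (\<integral>\<omega>. max (-K) (min K (W \<omega>)) \<partial>M)\<bar>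
    \<le> (\<integral>\<omega>. (if K \<le> \<bar>W \<omega>\<bar> then \<bar>W \<omega>\<bar> else 0) \<partial>M)"
proof -
  have [measurable]: "W \<in> borel_measurable M" using W by simp
  have trunc: "integrable M (\<lambda>\<omega>. max (-K) (min K (W \<omega>)))"
    by (rule integrable_const_bound[where B=K]) (use K in auto)
  have "\<bar>(\<integral>\<omega>. W \<omega> \<partial>M) - (\<integral>\<omega>. max (-K) (min K (W \<omega>)) \<partial>M)\<bar>
      = \<bar>\<integral>\<omega>. W \<omega> - max (-K) (min K (W \<omega>)) \<partial>M\<bar>"
    using W trunc by simp
  also have "\<dots> \<le> (\<integral>\<omega>. \<bar>W \<omega> - max (-K) (min K (W \<omega>))\<bar> \<partial>M)"
    by (rule integral_abs_bound)
  also have "\<dots> \<le> (\<integral>\<omega>. (if K \<le> \<bar>W \<omega>\<bar> then \<bar>W \<omega>\<bar> else 0) \<partial>M)"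
    by (intro Bochner_Integration.integral_mono Bochner_Integration.integrable_bound[OF integrable_abs[OF W]])
      (use W trunc K in auto)
  finally show ?thesis .
qed

lemma truncation_error_tail_dominated:
  fixes Z \<xi> :: "'a \<Rightarrow> real"
  assumes K: "0 < K" and L: "0 \<le> L" and Z: "integrable M Z" and \<xi>: "integrable M \<xi>"
    and tails: "\<And>K. (\<integral>\<omega>. (if K \<le> \<bar>Z \<omega>\<bar> then \<bar>Z \<omega>\<bar> else 0) \<partial>M)
                     \<le> (\<integral>\<omega>. (if K \<le> \<bar>Z \<omega>\<bar> then \<bar>\<xi> \<omega>\<bar> else 0) \<partial>M)"
  shows "\<bar>(\<integral>\<omega>. Z \<omega> \<partial>M) - (\<integral>\<omega>. max (-K) (min K (Z \<omega>)) \<partial>M)\<bar>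
    \<le> (\<integral>\<omega>. (if L \<le> \<bar>\<xi> \<omega>\<bar> then \<bar>\<xi> \<omega>\<bar> else 0) \<partial>M) + L * (\<integral>\<omega>. \<bar>\<xi> \<omega>\<bar> \<partial>M) / K"
proof -
  have abs_Z: "(\<integral>\<omega>. \<bar>Z \<omega>\<bar> \<partial>M) \<le> (\<integral>\<omega>. \<bar>\<xi> \<omega>\<bar> \<partial>M)"
    using tails[of 0] by simp
  have "L / K * (\<integral>\<omega>. \<bar>Z \<omega>\<bar> \<partial>M) \<le> L * (\<integral>\<omega>. \<bar>\<xi> \<omega>\<bar> \<partial>M) / K"
    using mult_left_mono[OF abs_Z, of "L / K"] K L by simp
  then show ?thesis
    using integral_truncation_error[OF K Z] tails[of K] tail_integral_Markov[OF K L Z \<xi>] by linarith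
qed

text \<open>If the tails of the \<open>Z n\<close> are dominated by those of a single integrable \<open>\<xi>\<close>, the family
  is uniformly integrable, so a constant value of \<open>\<integral> Z n\<close> passes to the pointwise limit.
  Truncation at level \<open>K\<close> reduces the claim to dominated convergence.\<close>

lemma integral_eq_of_tail_dominated:
  fixes Z :: "nat \<Rightarrow> 'a \<Rightarrow> real"
  assumes \<xi>: "integrable M \<xi>" and Y: "integrable M Y" and Z: "\<And>n. integrable M (Z n)"
    and lim: "\<And>\<omega>. \<omega> \<in> space M \<Longrightarrow> (\<lambda>n. Z n \<omega>) \<longlonglongrightarrow> Y \<omega>"
    and const: "\<And>n. (\<integral>\<omega>. Z n \<omega> \<partial>M) = c"
    and tails: "\<And>n K. (\<integral>\<omega>. (if K \<le> \<bar>Z n \<omega>\<bar> then \<bar>Z n \<omega>\<bar> else 0) \<partial>M)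
                     \<le> (\<integral>\<omega>. (if K \<le> \<bar>Z n \<omega>\<bar> then \<bar>\<xi> \<omega>\<bar> else 0) \<partial>M)"
  shows "(\<integral>\<omega>. Y \<omega> \<partial>M) = c"
proof -
  define e where "e L = (\<integral>\<omega>. (if L \<le> \<bar>\<xi> \<omega>\<bar> then \<bar>\<xi> \<omega>\<bar> else 0) \<partial>M)" for L
  define e' where "e' K = (\<integral>\<omega>. (if K \<le> \<bar>Y \<omega>\<bar> then \<bar>Y \<omega>\<bar> else 0) \<partial>M)" for K
  define C where "C = (\<integral>\<omega>. \<bar>\<xi> \<omega>\<bar> \<partial>M)"
  have [measurable]: "Y \<in> borel_measurable M" "Z n \<in> borel_measurable M" for n using Y Z by auto
  have bound: "\<bar>c - (\<integral>\<omega>. max (-K) (min K (Y \<omega>)) \<partial>M)\<bar> \<le> e L + L * C / K"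
    if K: "0 < K" and L: "0 \<le> L" for K L
  proof (rule LIMSEQ_le_const2)
    have "(\<lambda>n. \<integral>\<omega>. max (-K) (min K (Z n \<omega>)) \<partial>M) \<longlonglongrightarrow> (\<integral>\<omega>. max (-K) (min K (Y \<omega>)) \<partial>M)"
      by (rule integral_dominated_convergence[where w="\<lambda>_. K"])
        (use K lim in \<open>auto intro!: tendsto_max tendsto_min\<close>)
    then show "(\<lambda>n. \<bar>c - (\<integral>\<omega>. max (-K) (min K (Z n \<omega>)) \<partial>M)\<bar>)
        \<longlonglongrightarrow> \<bar>c - (\<integral>\<omega>. max (-K) (min K (Y \<omega>)) \<partial>M)\<bar>"
      by (intro tendsto_intros)
    show "\<exists>N. \<forall>n\<ge>N. \<bar>c - (\<integral>\<omega>. max (-K) (min K (Z n \<omega>)) \<partial>M)\<bar> \<le> e L + L * C / K"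
      using truncation_error_tail_dominated[OF K L Z \<xi> tails] const unfolding e_def C_def by auto
  qed
  have le_e: "\<bar>c - (\<integral>\<omega>. Y \<omega> \<partial>M)\<bar> \<le> e L" if L: "0 \<le> L" for L
  proof (rule LIMSEQ_le_const)
    have "(\<lambda>m. e L + L * C / real (Suc m) + e' (real (Suc m))) \<longlonglongrightarrow> e L + 0 + 0"
      unfolding e'_def
      by (intro tendsto_add tendsto_const LIMSEQ_Suc[OF lim_const_over_n]
          LIMSEQ_Suc[OF tail_integral_LIMSEQ_zero[OF Y]])
    then show "(\<lambda>m. e L + L * C / real (Suc m) + e' (real (Suc m))) \<longlonglongrightarrow> e L" by simp
    have "\<bar>c - (\<integral>\<omega>. Y \<omega> \<partial>M)\<bar> \<le> e L + L * C / real (Suc m) + e' (real (Suc m))" for m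
    proof -
      have K: "0 < real (Suc m)" by simp
      show ?thesis using bound[OF K L] integral_truncation_error[OF K Y] unfolding e'_def by linarith
    qed
    then show "\<exists>N. \<forall>m\<ge>N. \<bar>c - (\<integral>\<omega>. Y \<omega> \<partial>M)\<bar> \<le> e L + L * C / real (Suc m) + e' (real (Suc m))"
      by blast
  qed
  have "\<bar>c - (\<integral>\<omega>. Y \<omega> \<partial>M)\<bar> \<le> 0"
    by (rule LIMSEQ_le_const[OF tail_integral_LIMSEQ_zero[OF \<xi>]]) (use le_e in \<open>auto simp: e_def\<close>)
  then show ?thesis by simp
qed

end

context filtered_prob_space
begin

definition closed_martingale :: "(real \<Rightarrow> 'a \<Rightarrow> real) \<Rightarrow> bool" where
  "closed_martingale X \<longleftrightarrow> adapted M F T X \<and> (\<forall>s\<in>{0..T}. integrable M (X s)) \<and>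
     (\<forall>s\<in>{0..T}. AE \<omega> in M. cexp M F s (X T) \<omega> = X s \<omega>)"

lemma martingale_on_closed_martingale: "martingale_on M F T X \<Longrightarrow> closed_martingale X"
  unfolding martingale_on_def closed_martingale_def by auto

lemma closed_martingale_integrable: "closed_martingale X \<Longrightarrow> s \<in> {0..T} \<Longrightarrow> integrable M (X s)"
  unfolding closed_martingale_def by blast

lemma closed_martingale_set_integral:
  assumes X: "closed_martingale X" and v: "v \<in> {0..T}" and A: "A \<in> sets (F v)"
  shows "(\<integral>\<omega>. indicator A \<omega> * X v \<omega> \<partial>M) = (\<integral>\<omega>. indicator A \<omega> * X T \<omega> \<partial>M)"
proof -
  have "AE \<omega> in M. cexp M F v (X T) \<omega> = X v \<omega>"
    using X v unfolding closed_martingale_def by blast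
  then have "AE \<omega> in M. indicator A \<omega> * X v \<omega> = indicator A \<omega> * cexp M F v (X T) \<omega>"
    by eventually_elim simp
  then have "(\<integral>\<omega>. indicator A \<omega> * X v \<omega> \<partial>M) = (\<integral>\<omega>. indicator A \<omega> * cexp M F v (X T) \<omega> \<partial>M)"
    using sets_F_sets_M[OF v A] closed_martingale_integrable[OF X v]
      measurable_F_measurable_M[OF cexp_measurable v]
    by (intro integral_cong_AE) auto
  also have "\<dots> = (\<integral>\<omega>. indicator A \<omega> * X T \<omega> \<partial>M)"
    by (rule integral_indicator_cexp[OF v closed_martingale_integrable[OF X] A]) simp
  finally show ?thesis .
qed

lemma closed_martingale_set_integral_abs:
  assumes X: "closed_martingale X" and v: "v \<in> {0..T}" and A: "A \<in> sets (F v)"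
  shows "(\<integral>\<omega>. indicator A \<omega> * \<bar>X v \<omega>\<bar> \<partial>M) \<le> (\<integral>\<omega>. indicator A \<omega> * \<bar>X T \<omega>\<bar> \<partial>M)"
proof -
  have AM: "A \<in> sets M" by (rule sets_F_sets_M[OF v A])
  have iT: "integrable M (X T)" by (rule closed_martingale_integrable[OF X]) simp
  then have iaT: "integrable M (\<lambda>\<omega>. \<bar>X T \<omega>\<bar>)" and imT: "integrable M (\<lambda>\<omega>. -1 * X T \<omega>)" by auto
  have "AE \<omega> in M. cexp M F v (X T) \<omega> = X v \<omega>" using X v unfolding closed_martingale_def by blast
  moreover have "AE \<omega> in M. cexp M F v (X T) \<omega> \<le> cexp M F v (\<lambda>\<omega>. \<bar>X T \<omega>\<bar>) \<omega>"
    by (rule cexp_mono[OF v _ iT iaT]) simp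
  moreover have "AE \<omega> in M. cexp M F v (\<lambda>\<omega>. -1 * X T \<omega>) \<omega> \<le> cexp M F v (\<lambda>\<omega>. \<bar>X T \<omega>\<bar>) \<omega>"
    by (rule cexp_mono[OF v _ imT iaT]) simp
  moreover have "AE \<omega> in M. cexp M F v (\<lambda>\<omega>. -1 * X T \<omega>) \<omega> = -1 * cexp M F v (X T) \<omega>"
    by (rule cexp_cmult[OF v iT])
  ultimately have "AE \<omega> in M. indicator A \<omega> * \<bar>X v \<omega>\<bar> \<le> indicator A \<omega> * cexp M F v (\<lambda>\<omega>. \<bar>X T \<omega>\<bar>) \<omega>"
    by eventually_elim (auto simp: indicator_def)
  then have "(\<integral>\<omega>. indicator A \<omega> * \<bar>X v \<omega>\<bar> \<partial>M)
      \<le> (\<integral>\<omega>. indicator A \<omega> * cexp M F v (\<lambda>\<omega>. \<bar>X T \<omega>\<bar>) \<omega> \<partial>M)"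
    using integrable_mult_indicator[OF AM integrable_abs[OF closed_martingale_integrable[OF X v]]]
      integrable_mult_indicator[OF AM integrable_cexp[OF v iaT]]
    by (intro integral_mono_AE) auto
  also have "\<dots> = (\<integral>\<omega>. indicator A \<omega> * \<bar>X T \<omega>\<bar> \<partial>M)"
    by (rule integral_indicator_cexp[OF v iaT A])
  finally show ?thesis .
qed

lemma finite_valued_sampling:
  assumes X: "closed_martingale X" and G: "finite G" "G \<subseteq> {0..T}"
    and \<sigma>: "\<And>\<omega>. \<omega> \<in> space M \<Longrightarrow> \<sigma> \<omega> \<in> G"
    and level: "\<And>v. v \<in> G \<Longrightarrow> {\<omega>\<in>space M. \<sigma> \<omega> = v} \<in> sets (F v)"
  shows "integrable M (\<lambda>\<omega>. X (\<sigma> \<omega>) \<omega>)"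
    and "(\<integral>\<omega>. X (\<sigma> \<omega>) \<omega> \<partial>M) = (\<integral>\<omega>. X T \<omega> \<partial>M)"
    and "(\<integral>\<omega>. (if K \<le> \<bar>X (\<sigma> \<omega>) \<omega>\<bar> then \<bar>X (\<sigma> \<omega>) \<omega>\<bar> else 0) \<partial>M)
         \<le> (\<integral>\<omega>. (if K \<le> \<bar>X (\<sigma> \<omega>) \<omega>\<bar> then \<bar>X T \<omega>\<bar> else 0) \<partial>M)"
proof -
  define B where "B v = {\<omega>\<in>space M. \<sigma> \<omega> = v}" for v
  define BK where "BK v = B v \<inter> {\<omega>\<in>space M. K \<le> \<bar>X v \<omega>\<bar>}" for v
  have vT: "v \<in> {0..T}" if "v \<in> G" for v using G(2) that by blast
  have int: "integrable M (X v)" if "v \<in> {0..T}" for v by (rule closed_martingale_integrable[OF X that])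
  have B_F: "B v \<in> sets (F v)" and BK_F: "BK v \<in> sets (F v)" if v: "v \<in> G" for v
  proof -
    show B: "B v \<in> sets (F v)" unfolding B_def by (rule level[OF v])
    have "X v \<in> borel_measurable (F v)" using X vT[OF v] unfolding closed_martingale_def adapted_def by blast
    then have "{\<omega>\<in>space (F v). K \<le> \<bar>X v \<omega>\<bar>} \<in> sets (F v)" by measurable
    then show "BK v \<in> sets (F v)" unfolding BK_def using B vT[OF v] by auto
  qed
  have level_sum: "f (\<sigma> \<omega>) \<omega> = (\<Sum>v\<in>G. indicator (B v) \<omega> * f v \<omega>)"
    if "\<omega> \<in> space M" for f :: "real \<Rightarrow> 'a \<Rightarrow> real" and \<omega>
    unfolding B_def using sum_indicator_level_sets[where \<sigma>=\<sigma> and f=f, OF G(1) \<sigma>[OF that] that] by simp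
  have tail_sum: "(if K \<le> \<bar>X (\<sigma> \<omega>) \<omega>\<bar> then \<bar>f (\<sigma> \<omega>) \<omega>\<bar> else 0) = (\<Sum>v\<in>G. indicator (BK v) \<omega> * \<bar>f v \<omega>\<bar>)"
    if "\<omega> \<in> space M" for f :: "real \<Rightarrow> 'a \<Rightarrow> real" and \<omega>
    using level_sum[OF that, of "\<lambda>v \<omega>. if K \<le> \<bar>X v \<omega>\<bar> then \<bar>f v \<omega>\<bar> else 0"] that
    unfolding BK_def by (auto simp: indicator_def intro!: sum.cong)
  have B_M: "B v \<in> sets M" and BK_M: "BK v \<in> sets M" if "v \<in> G" for v
    using sets_F_sets_M[OF vT B_F] sets_F_sets_M[OF vT BK_F] that by auto
  note level_sum_integral = integral_indicator_sum[where G=G]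
  show "integrable M (\<lambda>\<omega>. X (\<sigma> \<omega>) \<omega>)"
    using level_sum_integral(1)[where A=B and f=X] B_M int vT by (subst Bochner_Integration.integrable_cong[OF refl level_sum]) auto
  have "(\<integral>\<omega>. X (\<sigma> \<omega>) \<omega> \<partial>M) = (\<Sum>v\<in>G. \<integral>\<omega>. indicator (B v) \<omega> * X v \<omega> \<partial>M)"
    using level_sum_integral(2)[where A=B and f=X] B_M int vT by (subst Bochner_Integration.integral_cong[OF refl level_sum]) auto
  also have "\<dots> = (\<Sum>v\<in>G. \<integral>\<omega>. indicator (B v) \<omega> * X T \<omega> \<partial>M)"
    using closed_martingale_set_integral[OF X vT B_F] by simp
  also have "\<dots> = (\<integral>\<omega>. X T \<omega> \<partial>M)"
    using level_sum_integral(2)[where A=B and f="\<lambda>_. X T"] B_M int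
    by (subst Bochner_Integration.integral_cong[OF refl level_sum[of _ "\<lambda>_. X T"]]) auto
  finally show "(\<integral>\<omega>. X (\<sigma> \<omega>) \<omega> \<partial>M) = (\<integral>\<omega>. X T \<omega> \<partial>M)" .
  have "(\<integral>\<omega>. (if K \<le> \<bar>X (\<sigma> \<omega>) \<omega>\<bar> then \<bar>X (\<sigma> \<omega>) \<omega>\<bar> else 0) \<partial>M)
      = (\<Sum>v\<in>G. \<integral>\<omega>. indicator (BK v) \<omega> * \<bar>X v \<omega>\<bar> \<partial>M)"
    using level_sum_integral(2)[where A=BK and f="\<lambda>v \<omega>. \<bar>X v \<omega>\<bar>"] BK_M int vT
    by (subst Bochner_Integration.integral_cong[OF refl tail_sum]) auto
  also have "\<dots> \<le> (\<Sum>v\<in>G. \<integral>\<omega>. indicator (BK v) \<omega> * \<bar>X T \<omega>\<bar> \<partial>M)"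
    using closed_martingale_set_integral_abs[OF X vT BK_F] by (simp add: sum_mono)
  also have "\<dots> = (\<integral>\<omega>. (if K \<le> \<bar>X (\<sigma> \<omega>) \<omega>\<bar> then \<bar>X T \<omega>\<bar> else 0) \<partial>M)"
    using level_sum_integral(2)[where A=BK and f="\<lambda>_ \<omega>. \<bar>X T \<omega>\<bar>"] BK_M int
    by (subst Bochner_Integration.integral_cong[OF refl tail_sum[of _ "\<lambda>_. X T"]]) auto
  finally show "(\<integral>\<omega>. (if K \<le> \<bar>X (\<sigma> \<omega>) \<omega>\<bar> then \<bar>X (\<sigma> \<omega>) \<omega>\<bar> else 0) \<partial>M)
         \<le> (\<integral>\<omega>. (if K \<le> \<bar>X (\<sigma> \<omega>) \<omega>\<bar> then \<bar>X T \<omega>\<bar> else 0) \<partial>M)" .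
qed

lemma optional_sampling_expectation:
  assumes X: "closed_martingale X" and rc: "right_continuous_process M T X"
    and \<rho>: "stopping_time_on M F T \<rho>" and X\<rho>: "integrable M (\<lambda>\<omega>. X (\<rho> \<omega>) \<omega>)"
  shows "(\<integral>\<omega>. X (\<rho> \<omega>) \<omega> \<partial>M) = (\<integral>\<omega>. X T \<omega> \<partial>M)"
proof -
  have \<rho>_range: "0 \<le> \<rho> \<omega>" "\<rho> \<omega> \<le> T" if "\<omega> \<in> space M" for \<omega>
    using stopping_time_range[OF \<rho> that] by auto
  note sampling = finite_valued_sampling[OF X finite_dyadic_grid dyadic_grid_subset[OF T_nonneg],
      of "\<lambda>\<omega>. dyadic_ceiling T n (\<rho> \<omega>)" for n]
  have grid: "dyadic_ceiling T n (\<rho> \<omega>) \<in> dyadic_grid T n" if "\<omega> \<in> space M" for n \<omega>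
    using dyadic_ceiling_in_grid[OF T_pos \<rho>_range[OF that]] .
  have level: "{\<omega>\<in>space M. dyadic_ceiling T n (\<rho> \<omega>) = v} \<in> sets (F v)" if "v \<in> dyadic_grid T n" for n v
    using dyadic_level_set_sets[OF \<rho> T_pos order_refl that] .
  show ?thesis
  proof (rule integral_eq_of_tail_dominated)
    show "integrable M (X T)" by (rule closed_martingale_integrable[OF X]) simp
    show "integrable M (\<lambda>\<omega>. X (\<rho> \<omega>) \<omega>)" by (rule X\<rho>)
    show "integrable M (\<lambda>\<omega>. X (dyadic_ceiling T n (\<rho> \<omega>)) \<omega>)" for n
      using sampling(1) grid level by blast
    show "(\<integral>\<omega>. X (dyadic_ceiling T n (\<rho> \<omega>)) \<omega> \<partial>M) = (\<integral>\<omega>. X T \<omega> \<partial>M)" for n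
      using sampling(2) grid level by blast
    show "(\<integral>\<omega>. (if K \<le> \<bar>X (dyadic_ceiling T n (\<rho> \<omega>)) \<omega>\<bar> then \<bar>X (dyadic_ceiling T n (\<rho> \<omega>)) \<omega>\<bar> else 0) \<partial>M)
        \<le> (\<integral>\<omega>. (if K \<le> \<bar>X (dyadic_ceiling T n (\<rho> \<omega>)) \<omega>\<bar> then \<bar>X T \<omega>\<bar> else 0) \<partial>M)" for n K
      using sampling(3) grid level by blast
    show "(\<lambda>n. X (dyadic_ceiling T n (\<rho> \<omega>)) \<omega>) \<longlonglongrightarrow> X (\<rho> \<omega>) \<omega>" if "\<omega> \<in> space M" for \<omega>
      using rc that unfolding right_continuous_process_def
      by (intro dyadic_ceiling_sampling_tendsto[where f="\<lambda>u. X u \<omega>", OF _ T_pos order_refl \<rho>_range[OF that]])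
        auto
  qed
qed

lemma stopping_time_after_on:
  assumes \<rho>: "stopping_time_on M F T \<rho>" and t: "t \<in> {0..T}" and A: "A \<in> sets (F t)"
    and after: "\<And>\<omega>. \<omega> \<in> A \<Longrightarrow> t < \<rho> \<omega>"
  shows "stopping_time_on M F T (\<lambda>\<omega>. if \<omega> \<in> A then \<rho> \<omega> else T)"
  unfolding stopping_time_on_def
proof safe
  fix \<omega> assume "\<omega> \<in> space M"
  then show "(if \<omega> \<in> A then \<rho> \<omega> else T) \<in> {0..T}" using stopping_time_range[OF \<rho>] by auto
next
  fix s assume s: "s \<in> {0..T}"
  have A_sub: "A \<subseteq> space M" using sets.sets_into_space[OF A] t by simp
  show "{\<omega> \<in> space M. (if \<omega> \<in> A then \<rho> \<omega> else T) \<le> s} \<in> sets (F s)"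
  proof (cases "T \<le> s")
    case True
    then have "{\<omega> \<in> space M. (if \<omega> \<in> A then \<rho> \<omega> else T) \<le> s} = space (F s)"
      using stopping_time_range[OF \<rho>] s by force
    then show ?thesis by simp
  next
    case T: False
    show ?thesis
    proof (cases "s \<le> t")
      case True
      then have "{\<omega> \<in> space M. (if \<omega> \<in> A then \<rho> \<omega> else T) \<le> s} = {}"
        using T after by force
      then show ?thesis by (simp only: sets.empty_sets)
    next
      case False
      then have "{\<omega> \<in> space M. (if \<omega> \<in> A then \<rho> \<omega> else T) \<le> s} = A \<inter> {\<omega> \<in> space M. \<rho> \<omega> \<le> s}"
        using T A_sub by auto
      moreover have "A \<in> sets (F s)" using A sets_F_mono[of t s] False t s by auto
      ultimately show ?thesis using stopping_time_le_sets[OF \<rho> s order_refl] by simp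
    qed
  qed
qed

text \<open>On an \<open>F t\<close>-event on which \<open>\<rho> > t\<close>, apply the unconditional statement to the time that
  equals \<open>\<rho>\<close> there and \<open>T\<close> elsewhere.\<close>

lemma set_integral_optional_sampling_after:
  assumes X: "closed_martingale X" and rc: "right_continuous_process M T X"
    and int: "integrable_at_stopping M F T X" and \<rho>: "stopping_time_on M F T \<rho>"
    and t: "t \<in> {0..T}" and A: "A \<in> sets (F t)" and after: "\<And>\<omega>. \<omega> \<in> A \<Longrightarrow> t < \<rho> \<omega>"
  shows "(\<integral>\<omega>. indicator A \<omega> * X (\<rho> \<omega>) \<omega> \<partial>M) = (\<integral>\<omega>. indicator A \<omega> * X (min t (\<rho> \<omega>)) \<omega> \<partial>M)"
proof -
  define \<rho>' where "\<rho>' \<omega> = (if \<omega> \<in> A then \<rho> \<omega> else T)" for \<omega>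
  have \<rho>': "stopping_time_on M F T \<rho>'"
    unfolding \<rho>'_def by (rule stopping_time_after_on[OF \<rho> t A after])
  have AM: "A \<in> sets M" by (rule sets_F_sets_M[OF t A])
  have X\<rho>: "integrable M (\<lambda>\<omega>. X (\<rho> \<omega>) \<omega>)" and XT: "integrable M (X T)"
    using integrable_at_stopping_integrable[OF int \<rho>] closed_martingale_integrable[OF X] by auto
  have "(\<integral>\<omega>. X (\<rho>' \<omega>) \<omega> \<partial>M) = (\<integral>\<omega>. X T \<omega> \<partial>M)"
    by (rule optional_sampling_expectation[OF X rc \<rho>' integrable_at_stopping_integrable[OF int \<rho>']])
  moreover have "X (\<rho>' \<omega>) \<omega> = indicator A \<omega> * X (\<rho> \<omega>) \<omega> + (X T \<omega> - indicator A \<omega> * X T \<omega>)" for \<omega>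
    unfolding \<rho>'_def by (simp add: indicator_def)
  ultimately have "(\<integral>\<omega>. indicator A \<omega> * X (\<rho> \<omega>) \<omega> \<partial>M) = (\<integral>\<omega>. indicator A \<omega> * X T \<omega> \<partial>M)"
    using integrable_mult_indicator[OF AM X\<rho>] integrable_mult_indicator[OF AM XT] XT by simp
  also have "\<dots> = (\<integral>\<omega>. indicator A \<omega> * X t \<omega> \<partial>M)"
    by (rule closed_martingale_set_integral[OF X t A, symmetric])
  also have "\<dots> = (\<integral>\<omega>. indicator A \<omega> * X (min t (\<rho> \<omega>)) \<omega> \<partial>M)"
    by (rule Bochner_Integration.integral_cong) (auto simp: indicator_def dest: after)
  finally show ?thesis .
qed

theorem optional_sampling:
  assumes X: "closed_martingale X" and rc: "right_continuous_process M T X"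
    and int: "integrable_at_stopping M F T X"
    and \<rho>: "stopping_time_on M F T \<rho>" and t: "t \<in> {0..T}"
  shows "AE \<omega> in M. cexp M F t (\<lambda>\<omega>. X (\<rho> \<omega>) \<omega>) \<omega> = X (min t (\<rho> \<omega>)) \<omega>"
proof (rule cexp_charact[OF t])
  show X\<rho>: "integrable M (\<lambda>\<omega>. X (\<rho> \<omega>) \<omega>)"
    by (rule integrable_at_stopping_integrable[OF int \<rho>])
  show X\<rho>t: "integrable M (\<lambda>\<omega>. X (min t (\<rho> \<omega>)) \<omega>)"
    by (rule integrable_at_stopping_integrable[OF int stopping_time_min_const[OF \<rho> t]])
  show "(\<lambda>\<omega>. X (min t (\<rho> \<omega>)) \<omega>) \<in> borel_measurable (F t)"
    using X rc \<rho> t unfolding closed_martingale_def by (blast intro: stopped_process_measurable)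
  fix A assume A: "A \<in> sets (F t)"
  define R where "R = {\<omega>\<in>space M. \<rho> \<omega> \<le> t}"
  have R: "R \<in> sets (F t)" unfolding R_def by (rule stopping_time_le_sets[OF \<rho> t order_refl])
  have A1M: "A \<inter> R \<in> sets M" and A2: "A - R \<in> sets (F t)"
    using sets_F_sets_M[OF t A] sets_F_sets_M[OF t R] A R by auto
  have A2M: "A - R \<in> sets M" by (rule sets_F_sets_M[OF t A2])
  have "A - R \<subseteq> space M" using sets.sets_into_space[OF A2M] .
  then have on_A2: "(\<integral>\<omega>. indicator (A - R) \<omega> * X (\<rho> \<omega>) \<omega> \<partial>M)
      = (\<integral>\<omega>. indicator (A - R) \<omega> * X (min t (\<rho> \<omega>)) \<omega> \<partial>M)"
    by (intro set_integral_optional_sampling_after[OF X rc int \<rho> t A2]) (auto simp: R_def)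
  have on_A1: "(\<integral>\<omega>. indicator (A \<inter> R) \<omega> * X (\<rho> \<omega>) \<omega> \<partial>M)
      = (\<integral>\<omega>. indicator (A \<inter> R) \<omega> * X (min t (\<rho> \<omega>)) \<omega> \<partial>M)"
    by (rule Bochner_Integration.integral_cong) (auto simp: R_def indicator_def min_def)
  have split: "indicator A \<omega> * f \<omega> = indicator (A \<inter> R) \<omega> * f \<omega> + indicator (A - R) \<omega> * f \<omega>"
    for \<omega> and f :: "'a \<Rightarrow> real"
    by (auto simp: indicator_def)
  show "(\<integral>\<omega>. indicator A \<omega> * X (\<rho> \<omega>) \<omega> \<partial>M) = (\<integral>\<omega>. indicator A \<omega> * X (min t (\<rho> \<omega>)) \<omega> \<partial>M)"
    unfolding split[of _ "\<lambda>\<omega>. X (\<rho> \<omega>) \<omega>"] split[of _ "\<lambda>\<omega>. X (min t (\<rho> \<omega>)) \<omega>"]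
    using on_A1 on_A2 integrable_mult_indicator[OF A1M X\<rho>] integrable_mult_indicator[OF A2M X\<rho>]
      integrable_mult_indicator[OF A1M X\<rho>t] integrable_mult_indicator[OF A2M X\<rho>t]
    by simp
qed

end

section \<open>The not-so-bad trader\<close>

locale not_so_bad_trader = filtered_prob_space M F T for M :: "'a measure" and F T +
  fixes cQ Q K q p cPbad cPgood Pbad Pnsb h :: "real \<Rightarrow> 'a \<Rightarrow> real"
    and \<tau>s \<theta>star \<tau>star \<theta> :: "'a \<Rightarrow> real"
    and cPnsb PNL HVA D vaK\<theta> :: "real \<Rightarrow> 'a \<Rightarrow> real"
  assumes \<theta>_def: "\<theta> = exit_time \<theta>star \<tau>star \<tau>s"
    and cPnsb_def: "cPnsb = nsb_flow cPbad cPgood \<tau>s \<theta>"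
    and PNL_def: "PNL = pnl_nsb cQ q Q cPnsb p Pnsb h \<tau>s \<theta>"
    and HVA_def: "HVA = (\<lambda>t \<omega>. - va M F T PNL t \<omega>)"
    and D_def: "D = (\<lambda>t. cexp M F t (\<lambda>\<omega>. ind_before \<tau>s (\<theta> \<omega>) \<omega> *
                      (Q (\<theta> \<omega>) \<omega> - (Pnsb (\<theta> \<omega>) \<omega> - Pbad (\<theta> \<omega>) \<omega>))))"
    and vaK\<theta>_def: "vaK\<theta> = va M F T (stopped K \<theta>)"
    and cQ: "cash_flow M F T cQ"
    and Q_reg: "regular_process M F T Q"
    and K: "is_drift M F T (\<lambda>t \<omega>. cQ t \<omega> + Q t \<omega>) K"
    and q_reg: "regular_process M F T q"
    and p_reg: "regular_process M F T p"
    and \<tau>s: "stopping_time_on M F T \<tau>s" and \<tau>s_pos: "\<forall>\<omega>\<in>space M. 0 < \<tau>s \<omega>"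
    and cPbad: "cash_flow M F T cPbad" and cPgood: "cash_flow M F T cPgood"
    and Pbad_reg: "regular_process M F T Pbad"
    and p_Pbad: "\<forall>t\<in>{0..T}. AE \<omega> in M. t < \<tau>s \<omega> \<longrightarrow> p t \<omega> = Pbad t \<omega>"
    and \<theta>star: "stopping_time_on M F T \<theta>star" and \<theta>star_le: "\<forall>\<omega>\<in>space M. \<theta>star \<omega> \<le> \<tau>s \<omega>"
    and \<tau>star: "stopping_time_on M F T \<tau>star" and \<tau>star_ge: "\<forall>\<omega>\<in>space M. \<tau>s \<omega> \<le> \<tau>star \<omega>"
    and zero_call: "AE \<omega> in M. ind_before \<tau>s (\<theta> \<omega>) \<omega> * q (\<theta> \<omega>) \<omega>
                      + (1 - ind_before \<tau>s (\<theta> \<omega>) \<omega>) * Q (\<theta> \<omega>) \<omega> = 0"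
    and Pnsb_reg: "regular_process M F T Pnsb"
    and Pnsb_val: "\<forall>t\<in>{0..T}. AE \<omega> in M. Pnsb t \<omega> = va M F T cPnsb t \<omega>"
    and h_mart: "martingale_on M F T h"
begin

lemma cPbad_reg: "regular_process M F T cPbad" and cPgood_reg: "regular_process M F T cPgood"
  and cQ_reg: "regular_process M F T cQ"
  using cPbad cPgood cQ unfolding cash_flow_def by blast+

lemma \<theta>_stopping_time: "stopping_time_on M F T \<theta>"
  unfolding \<theta>_def using \<theta>star_le \<tau>star_ge by (intro exit_time_stopping_time[OF \<theta>star \<tau>s \<tau>star]) auto

lemma \<theta>_range: "\<omega> \<in> space M \<Longrightarrow> 0 \<le> \<theta> \<omega> \<and> \<theta> \<omega> \<le> T"
  by (rule stopping_time_range[OF \<theta>_stopping_time])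

lemma ind_before_\<theta>: "\<omega> \<in> space M \<Longrightarrow> ind_before \<tau>s (\<theta> \<omega>) \<omega> = (if \<theta>star \<omega> < \<tau>s \<omega> then 1 else 0)"
  unfolding ind_before_def \<theta>_def exit_time_def using \<tau>star_ge by auto

lemma cPnsb_adapted: "adapted M F T cPnsb"
  unfolding adapted_def
proof
  fix t assume t: "t \<in> {0..T}"
  note stopped = stopped_process_measurable[OF _ regular_process_right_continuous \<tau>s t]
  have [measurable]: "(\<lambda>\<omega>. cPbad (min t (\<tau>s \<omega>)) \<omega>) \<in> borel_measurable (F t)"
      "(\<lambda>\<omega>. cPgood (min t (\<tau>s \<omega>)) \<omega>) \<in> borel_measurable (F t)"
      "cPbad t \<in> borel_measurable (F t)" "cPgood t \<in> borel_measurable (F t)"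
      "(\<lambda>\<omega>. min t (\<tau>s \<omega>)) \<in> borel_measurable (F t)" "(\<lambda>\<omega>. min t (\<theta>star \<omega>)) \<in> borel_measurable (F t)"
    using stopped[OF regular_process_adapted[OF cPbad_reg] cPbad_reg]
      stopped[OF regular_process_adapted[OF cPgood_reg] cPgood_reg]
      regular_process_adapted[OF cPbad_reg] regular_process_adapted[OF cPgood_reg] t
      measurable_min_stopping_time[OF \<tau>s t] measurable_min_stopping_time[OF \<theta>star t]
    unfolding adapted_def by auto
  have [measurable]: "Measurable.pred (F t) (\<lambda>\<omega>. \<tau>s \<omega> \<le> t)"
    unfolding pred_def using stopping_time_le_sets[OF \<tau>s t order_refl] t by simp
  \<comment> \<open>On \<open>{\<tau>s \<le> t}\<close> the event \<open>{\<theta> < \<tau>s}\<close> is \<open>{min t \<theta>star < min t \<tau>s}\<close>, which is known at \<open>t\<close>.\<close>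
  have "cPnsb t \<omega> = cPbad (min t (\<tau>s \<omega>)) \<omega>
      + (if \<tau>s \<omega> \<le> t \<and> min t (\<theta>star \<omega>) < min t (\<tau>s \<omega>) then cPbad t \<omega> - cPbad (min t (\<tau>s \<omega>)) \<omega> else 0)
      + (if \<tau>s \<omega> \<le> t \<and> \<not> min t (\<theta>star \<omega>) < min t (\<tau>s \<omega>) then cPgood t \<omega> - cPgood (min t (\<tau>s \<omega>)) \<omega> else 0)"
    if \<omega>: "\<omega> \<in> space (F t)" for \<omega>
  proof -
    have "\<omega> \<in> space M" using \<omega> t by simp
    then show ?thesis
      using \<theta>star_le ind_before_\<theta>[of \<omega>]
      unfolding cPnsb_def nsb_flow_def stopped_def by (auto simp: ind_before_def min_def)
  qed
  then show "cPnsb t \<in> borel_measurable (F t)"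
    by (subst measurable_cong) (assumption, measurable)
qed

lemma cPnsb_right_continuous: "right_continuous_process M T cPnsb"
  unfolding right_continuous_process_def
proof (intro ballI)
  fix \<omega> s assume \<omega>: "\<omega> \<in> space M" and s: "s \<in> {0..<T}"
  have rc: "((\<lambda>u. cPbad u \<omega>) \<longlongrightarrow> cPbad s \<omega>) (at_right s)" "((\<lambda>u. cPgood u \<omega>) \<longlongrightarrow> cPgood s \<omega>) (at_right s)"
    using regular_process_right_continuous[OF cPbad_reg] regular_process_right_continuous[OF cPgood_reg] \<omega> s
    unfolding right_continuous_process_def by auto
  define J where "J = ind_before \<tau>s (\<theta> \<omega>) \<omega>"
  define g where "g u = cPbad (\<tau>s \<omega>) \<omega> + J * (cPbad u \<omega> - cPbad (\<tau>s \<omega>) \<omega>)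
    + (1 - J) * (cPgood u \<omega> - cPgood (\<tau>s \<omega>) \<omega>)" for u
  have "eventually (\<lambda>u. cPnsb u \<omega> = (if s < \<tau>s \<omega> then cPbad u \<omega> else g u)) (at_right s)"
  proof (cases "s < \<tau>s \<omega>")
    case True
    show ?thesis using eventually_at_right_real[OF True]
      by eventually_elim (auto simp: cPnsb_def nsb_flow_def stopped_def ind_before_def)
  next
    case False
    show ?thesis using eventually_at_right_less[of s]
      by eventually_elim (use False in \<open>auto simp: cPnsb_def nsb_flow_def stopped_def ind_before_def g_def J_def\<close>)
  qed
  moreover have "cPnsb s \<omega> = (if s < \<tau>s \<omega> then cPbad s \<omega> else g s)"
    by (auto simp: cPnsb_def nsb_flow_def stopped_def ind_before_def g_def J_def)
  moreover have "((\<lambda>u. if s < \<tau>s \<omega> then cPbad u \<omega> else g u) \<longlongrightarrow> (if s < \<tau>s \<omega> then cPbad s \<omega> else g s)) (at_right s)"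
    unfolding g_def using rc by (auto intro!: tendsto_intros)
  ultimately show "((\<lambda>u. cPnsb u \<omega>) \<longlongrightarrow> cPnsb s \<omega>) (at_right s)"
    by (simp add: tendsto_cong)
qed

lemma cPnsb_integrable_at_stopping: "integrable_at_stopping M F T cPnsb"
  unfolding integrable_at_stopping_def
proof safe
  fix \<sigma> assume \<sigma>: "stopping_time_on M F T \<sigma>"
  note int = regular_process_integrable_stopped
  have i: "integrable M (\<lambda>\<omega>. cPbad (min (\<sigma> \<omega>) (\<tau>s \<omega>)) \<omega>)" "integrable M (\<lambda>\<omega>. cPbad (\<sigma> \<omega>) \<omega>)"
    "integrable M (\<lambda>\<omega>. cPbad (\<tau>s \<omega>) \<omega>)" "integrable M (\<lambda>\<omega>. cPgood (\<sigma> \<omega>) \<omega>)"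
    "integrable M (\<lambda>\<omega>. cPgood (\<tau>s \<omega>) \<omega>)"
    using int[OF cPbad_reg stopping_time_min[OF \<sigma> \<tau>s]] int[OF cPbad_reg \<sigma>] int[OF cPbad_reg \<tau>s]
      int[OF cPgood_reg \<sigma>] int[OF cPgood_reg \<tau>s] by auto
  then have [measurable]: "(\<lambda>\<omega>. cPbad (min (\<sigma> \<omega>) (\<tau>s \<omega>)) \<omega>) \<in> borel_measurable M"
    "(\<lambda>\<omega>. cPbad (\<sigma> \<omega>) \<omega>) \<in> borel_measurable M" "(\<lambda>\<omega>. cPbad (\<tau>s \<omega>) \<omega>) \<in> borel_measurable M"
    "(\<lambda>\<omega>. cPgood (\<sigma> \<omega>) \<omega>) \<in> borel_measurable M" "(\<lambda>\<omega>. cPgood (\<tau>s \<omega>) \<omega>) \<in> borel_measurable M"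
    by auto
  have [measurable]: "\<sigma> \<in> borel_measurable M" "\<tau>s \<in> borel_measurable M" "\<theta> \<in> borel_measurable M"
    using stopping_time_measurable \<sigma> \<tau>s \<theta>_stopping_time by auto
  show "integrable M (\<lambda>\<omega>. cPnsb (\<sigma> \<omega>) \<omega>)"
    unfolding cPnsb_def nsb_flow_def stopped_def ind_before_def
  proof (rule Bochner_Integration.integrable_bound[where f="\<lambda>\<omega>. \<bar>cPbad (min (\<sigma> \<omega>) (\<tau>s \<omega>)) \<omega>\<bar>
      + \<bar>cPbad (\<sigma> \<omega>) \<omega>\<bar> + \<bar>cPbad (\<tau>s \<omega>) \<omega>\<bar> + \<bar>cPgood (\<sigma> \<omega>) \<omega>\<bar> + \<bar>cPgood (\<tau>s \<omega>) \<omega>\<bar>"])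
    show "integrable M (\<lambda>\<omega>. \<bar>cPbad (min (\<sigma> \<omega>) (\<tau>s \<omega>)) \<omega>\<bar> + \<bar>cPbad (\<sigma> \<omega>) \<omega>\<bar>
        + \<bar>cPbad (\<tau>s \<omega>) \<omega>\<bar> + \<bar>cPgood (\<sigma> \<omega>) \<omega>\<bar> + \<bar>cPgood (\<tau>s \<omega>) \<omega>\<bar>)"
      using i by simp
  qed (measurable, rule AE_I2, auto simp: abs_if)
qed

lemma hedge_closed_martingale: "closed_martingale (\<lambda>t \<omega>. cPnsb t \<omega> + Pnsb t \<omega>)"
  unfolding closed_martingale_def
proof (intro conjI ballI)
  have cPnsb_int: "integrable M (cPnsb s)" and Pnsb_int: "integrable M (Pnsb s)" if "s \<in> {0..T}" for s
    using integrable_at_stopping_integrable_const[OF cPnsb_integrable_at_stopping that]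
      integrable_at_stopping_integrable_const[OF regular_process_integrable_at_stopping[OF Pnsb_reg] that]
    by auto
  show "adapted M F T (\<lambda>t \<omega>. cPnsb t \<omega> + Pnsb t \<omega>)"
    by (rule adapted_add[OF cPnsb_adapted regular_process_adapted[OF Pnsb_reg]])
  fix s assume s: "s \<in> {0..T}"
  show "integrable M (\<lambda>\<omega>. cPnsb s \<omega> + Pnsb s \<omega>)" using cPnsb_int Pnsb_int s by simp
  have [measurable]: "cPnsb T \<in> borel_measurable M" "Pnsb T \<in> borel_measurable M"
    using cPnsb_int Pnsb_int by auto
  have "AE \<omega> in M. Pnsb T \<omega> = cexp M F T (\<lambda>_. 0) \<omega>"
    using bspec[OF Pnsb_val, of T] unfolding va_def by simp
  moreover have "AE \<omega> in M. cexp M F T (\<lambda>_. 0) \<omega> = 0" by (rule cexp_F_meas) auto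
  ultimately have "AE \<omega> in M. Pnsb T \<omega> = 0" by eventually_elim simp
  \<comment> \<open>Since \<open>Pnsb T = 0\<close>, \<open>Pnsb s = E_s[cPnsb T] - cPnsb s\<close> is exactly the closedness condition.\<close>
  then have "AE \<omega> in M. cexp M F s (\<lambda>\<omega>. cPnsb T \<omega> + Pnsb T \<omega>) \<omega> = cexp M F s (cPnsb T) \<omega>"
    by (intro cexp_cong[OF s]) auto
  moreover have "AE \<omega> in M. Pnsb s \<omega> = cexp M F s (\<lambda>\<omega>. cPnsb T \<omega> - cPnsb s \<omega>) \<omega>"
    using Pnsb_val s unfolding va_def by simp
  moreover have "AE \<omega> in M. cexp M F s (\<lambda>\<omega>. cPnsb T \<omega> - cPnsb s \<omega>) \<omega> = cexp M F s (cPnsb T) \<omega> - cexp M F s (cPnsb s) \<omega>"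
    using cPnsb_int s by (intro cexp_diff) auto
  moreover have "AE \<omega> in M. cexp M F s (cPnsb s) \<omega> = cPnsb s \<omega>"
    using cPnsb_int cPnsb_adapted s unfolding adapted_def by (intro cexp_F_meas) auto
  ultimately show "AE \<omega> in M. cexp M F s (\<lambda>\<omega>. cPnsb T \<omega> + Pnsb T \<omega>) \<omega> = cPnsb s \<omega> + Pnsb s \<omega>"
    by eventually_elim simp
qed

lemma K_cadlag: "cadlag_process M T K"
  and K_mono: "\<And>\<omega>. \<omega> \<in> space M \<Longrightarrow> mono_on {0..T} (\<lambda>t. K t \<omega>) \<and> K 0 \<omega> = 0"
  and K_integrable: "\<And>t. t \<in> {0..T} \<Longrightarrow> integrable M (K t)"
  and asset_martingale: "martingale_on M F T (\<lambda>t \<omega>. cQ t \<omega> + Q t \<omega> + K t \<omega>)"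
  using K unfolding is_drift_def by (auto simp: add.assoc)

lemma K_adapted: "adapted M F T K"
  unfolding adapted_def
proof
  fix t assume t: "t \<in> {0..T}"
  have [measurable]: "(\<lambda>\<omega>. cQ t \<omega> + Q t \<omega> + K t \<omega>) \<in> borel_measurable (F t)"
      "cQ t \<in> borel_measurable (F t)" "Q t \<in> borel_measurable (F t)"
    using asset_martingale regular_process_adapted[OF cQ_reg] regular_process_adapted[OF Q_reg] t
    unfolding martingale_on_def adapted_def by auto
  have "(\<lambda>\<omega>. (cQ t \<omega> + Q t \<omega> + K t \<omega>) - cQ t \<omega> - Q t \<omega>) \<in> borel_measurable (F t)" by measurable
  then show "K t \<in> borel_measurable (F t)" by simp
qed

text \<open>\<open>K\<close> is nondecreasing with \<open>K 0 = 0\<close>, so \<open>0 \<le> K \<sigma> \<le> K T\<close> for every stopping time \<open>\<sigma>\<close>.\<close>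

lemma K_integrable_at_stopping: "integrable_at_stopping M F T K"
  unfolding integrable_at_stopping_def
proof safe
  fix \<sigma> assume \<sigma>: "stopping_time_on M F T \<sigma>"
  have "(\<lambda>\<omega>. K (min T (\<sigma> \<omega>)) \<omega>) \<in> borel_measurable M"
    using stopped_process_measurable[OF K_adapted cadlag_process_right_continuous[OF K_cadlag] \<sigma>]
    by (intro measurable_F_measurable_M[of _ T]) auto
  moreover have "(\<lambda>\<omega>. K (min T (\<sigma> \<omega>)) \<omega>) \<in> borel_measurable M \<longleftrightarrow> (\<lambda>\<omega>. K (\<sigma> \<omega>) \<omega>) \<in> borel_measurable M"
    by (rule measurable_cong) (simp add: min_absorb2 stopping_time_range[OF \<sigma>])
  ultimately have meas: "(\<lambda>\<omega>. K (\<sigma> \<omega>) \<omega>) \<in> borel_measurable M" by simp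
  show "integrable M (\<lambda>\<omega>. K (\<sigma> \<omega>) \<omega>)"
  proof (rule Bochner_Integration.integrable_bound[OF K_integrable[of T] meas AE_I2])
    fix \<omega> assume \<omega>: "\<omega> \<in> space M"
    have mono: "mono_on {0..T} (\<lambda>t. K t \<omega>)" using K_mono[OF \<omega>] by blast
    have "K 0 \<omega> \<le> K (\<sigma> \<omega>) \<omega>" "K (\<sigma> \<omega>) \<omega> \<le> K T \<omega>"
      using mono_onD[OF mono, of 0 "\<sigma> \<omega>"] mono_onD[OF mono, of "\<sigma> \<omega>" T] stopping_time_range[OF \<sigma> \<omega>]
      by auto
    then show "norm (K (\<sigma> \<omega>) \<omega>) \<le> norm (K T \<omega>)" using K_mono[OF \<omega>] by simp
  qed simp
qed

lemma asset_optional_sampling: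
  "t \<in> {0..T} \<Longrightarrow> AE \<omega> in M. cexp M F t (\<lambda>\<omega>. cQ (\<theta> \<omega>) \<omega> + Q (\<theta> \<omega>) \<omega> + K (\<theta> \<omega>) \<omega>) \<omega>
     = cQ (min t (\<theta> \<omega>)) \<omega> + Q (min t (\<theta> \<omega>)) \<omega> + K (min t (\<theta> \<omega>)) \<omega>"
  using optional_sampling[OF martingale_on_closed_martingale[OF asset_martingale] _ _ \<theta>_stopping_time]
    right_continuous_add[OF right_continuous_add[OF regular_process_right_continuous[OF cQ_reg]
      regular_process_right_continuous[OF Q_reg]] cadlag_process_right_continuous[OF K_cadlag]]
    integrable_at_stopping_add[OF integrable_at_stopping_add[OF regular_process_integrable_at_stopping[OF cQ_reg]
      regular_process_integrable_at_stopping[OF Q_reg]] K_integrable_at_stopping]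
  by simp

lemma hedge_optional_sampling:
  "t \<in> {0..T} \<Longrightarrow> AE \<omega> in M. cexp M F t (\<lambda>\<omega>. cPnsb (\<theta> \<omega>) \<omega> + Pnsb (\<theta> \<omega>) \<omega>) \<omega>
     = cPnsb (min t (\<theta> \<omega>)) \<omega> + Pnsb (min t (\<theta> \<omega>)) \<omega>"
  using optional_sampling[OF hedge_closed_martingale
      right_continuous_add[OF cPnsb_right_continuous regular_process_right_continuous[OF Pnsb_reg]]
      integrable_at_stopping_add[OF cPnsb_integrable_at_stopping regular_process_integrable_at_stopping[OF Pnsb_reg]]
      \<theta>_stopping_time]
  by simp

lemma p_eq_Pbad_before_switch: "AE \<omega> in M. \<forall>s\<in>{0..T}. s < \<tau>s \<omega> \<longrightarrow> p s \<omega> = Pbad s \<omega>"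
  using p_Pbad stopping_time_range[OF \<tau>s]
  by (intro right_continuous_AE_eq_before regular_process_right_continuous[OF p_reg]
      regular_process_right_continuous[OF Pbad_reg]) auto

lemma pnl_eq: "\<forall>t\<in>{0..T}. AE \<omega> in M. PNL t \<omega> =
        from0 (stopped (\<lambda>t \<omega>. cQ t \<omega> + ind_before \<tau>s t \<omega> * q t \<omega> + (1 - ind_before \<tau>s t \<omega>) * Q t \<omega>) \<theta>) t \<omega>
        - from0 (stopped (\<lambda>t \<omega>. cPnsb t \<omega> + ind_before \<tau>s t \<omega> * Pbad t \<omega> + (1 - ind_before \<tau>s t \<omega>) * Pnsb t \<omega>) \<theta>) t \<omega>
        - h t \<omega>"
proof
  fix t assume t: "t \<in> {0..T}"
  show "AE \<omega> in M. PNL t \<omega> =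
        from0 (stopped (\<lambda>t \<omega>. cQ t \<omega> + ind_before \<tau>s t \<omega> * q t \<omega> + (1 - ind_before \<tau>s t \<omega>) * Q t \<omega>) \<theta>) t \<omega>
        - from0 (stopped (\<lambda>t \<omega>. cPnsb t \<omega> + ind_before \<tau>s t \<omega> * Pbad t \<omega> + (1 - ind_before \<tau>s t \<omega>) * Pnsb t \<omega>) \<theta>) t \<omega>
        - h t \<omega>"
    using p_eq_Pbad_before_switch zero_call AE_space
  proof eventually_elim
    case (elim \<omega>)
    \<comment> \<open>The hedge is marked at \<open>p = Pbad\<close> before the switch, and the call term vanishes.\<close>
    have "ind_before \<tau>s s \<omega> * p s \<omega> = ind_before \<tau>s s \<omega> * Pbad s \<omega>" if "s \<in> {0..T}" for s
      using elim(1) that by (auto simp: ind_before_def)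
    then have hedge_mark: "ind_before \<tau>s (min s (\<theta> \<omega>)) \<omega> * p (min s (\<theta> \<omega>)) \<omega>
        = ind_before \<tau>s (min s (\<theta> \<omega>)) \<omega> * Pbad (min s (\<theta> \<omega>)) \<omega>" if "s \<in> {0..T}" for s
      using that \<theta>_range[OF elim(3)] by (simp add: min_def)
    then have "from0 (stopped (\<lambda>t \<omega>. cPnsb t \<omega> + ind_before \<tau>s t \<omega> * p t \<omega> + (1 - ind_before \<tau>s t \<omega>) * Pnsb t \<omega>) \<theta>) t \<omega>
        = from0 (stopped (\<lambda>t \<omega>. cPnsb t \<omega> + ind_before \<tau>s t \<omega> * Pbad t \<omega> + (1 - ind_before \<tau>s t \<omega>) * Pnsb t \<omega>) \<theta>) t \<omega>"
      unfolding from0_def stopped_def using t by (simp only: hedge_mark horizon_endpoints)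
    then show ?case using elim(2) unfolding PNL_def pnl_nsb_def by simp
  qed
qed

lemma vaK\<theta>_eq: "\<forall>t\<in>{0..T}. AE \<omega> in M. vaK\<theta> t \<omega> =
        cQ (min t (\<theta> \<omega>)) \<omega> + Q (min t (\<theta> \<omega>)) \<omega> - cexp M F t (\<lambda>\<omega>. cQ (\<theta> \<omega>) \<omega> + Q (\<theta> \<omega>) \<omega>) \<omega>"
proof
  fix t assume t: "t \<in> {0..T}"
  have \<theta>t: "stopping_time_on M F T (\<lambda>\<omega>. min t (\<theta> \<omega>))"
    by (rule stopping_time_min_const[OF \<theta>_stopping_time t])
  note int = integrable_at_stopping_integrable[OF K_integrable_at_stopping]
    regular_process_integrable_stopped[OF cQ_reg]
    regular_process_integrable_stopped[OF Q_reg]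
  have iK: "integrable M (\<lambda>\<omega>. K (\<theta> \<omega>) \<omega>)" "integrable M (\<lambda>\<omega>. K (min t (\<theta> \<omega>)) \<omega>)"
    using int(1)[OF \<theta>_stopping_time] int(1)[OF \<theta>t] by auto
  have iQ: "integrable M (\<lambda>\<omega>. cQ (\<theta> \<omega>) \<omega> + Q (\<theta> \<omega>) \<omega>)"
    using int(2,3)[OF \<theta>_stopping_time] by simp
  have K\<theta>t: "(\<lambda>\<omega>. K (min t (\<theta> \<omega>)) \<omega>) \<in> borel_measurable (F t)"
    by (rule stopped_process_measurable[OF K_adapted cadlag_process_right_continuous[OF K_cadlag]
          \<theta>_stopping_time t])
  have [measurable]: "(\<lambda>\<omega>. K (\<theta> \<omega>) \<omega>) \<in> borel_measurable M" "(\<lambda>\<omega>. K (min t (\<theta> \<omega>)) \<omega>) \<in> borel_measurable M"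
    using iK by auto
  have "AE \<omega> in M. vaK\<theta> t \<omega> = cexp M F t (\<lambda>\<omega>. K (\<theta> \<omega>) \<omega> - K (min t (\<theta> \<omega>)) \<omega>) \<omega>"
  proof -
    have "(\<lambda>\<omega>. K (min T (\<theta> \<omega>)) \<omega>) \<in> borel_measurable M \<longleftrightarrow> (\<lambda>\<omega>. K (\<theta> \<omega>) \<omega>) \<in> borel_measurable M"
      by (rule measurable_cong) (simp add: min_absorb2 \<theta>_range)
    then have "(\<lambda>\<omega>. K (min T (\<theta> \<omega>)) \<omega>) \<in> borel_measurable M" by simp
    then have "AE \<omega> in M. cexp M F t (\<lambda>\<omega>. K (min T (\<theta> \<omega>)) \<omega> - K (min t (\<theta> \<omega>)) \<omega>) \<omega>
        = cexp M F t (\<lambda>\<omega>. K (\<theta> \<omega>) \<omega> - K (min t (\<theta> \<omega>)) \<omega>) \<omega>"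
      by (intro cexp_cong[OF t] AE_I2) (auto simp: min_absorb2 \<theta>_range)
    then show ?thesis unfolding vaK\<theta>_def va_def stopped_def .
  qed
  moreover have "AE \<omega> in M. cexp M F t (\<lambda>\<omega>. K (\<theta> \<omega>) \<omega> - K (min t (\<theta> \<omega>)) \<omega>) \<omega>
      = cexp M F t (\<lambda>\<omega>. K (\<theta> \<omega>) \<omega>) \<omega> - cexp M F t (\<lambda>\<omega>. K (min t (\<theta> \<omega>)) \<omega>) \<omega>"
    by (rule cexp_diff[OF t iK])
  moreover have "AE \<omega> in M. cexp M F t (\<lambda>\<omega>. K (min t (\<theta> \<omega>)) \<omega>) \<omega> = K (min t (\<theta> \<omega>)) \<omega>"
    by (rule cexp_F_meas[OF t iK(2) K\<theta>t])
  moreover have "AE \<omega> in M. cexp M F t (\<lambda>\<omega>. (cQ (\<theta> \<omega>) \<omega> + Q (\<theta> \<omega>) \<omega>) + K (\<theta> \<omega>) \<omega>) \<omega>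
      = cexp M F t (\<lambda>\<omega>. cQ (\<theta> \<omega>) \<omega> + Q (\<theta> \<omega>) \<omega>) \<omega> + cexp M F t (\<lambda>\<omega>. K (\<theta> \<omega>) \<omega>) \<omega>"
    by (rule cexp_add[OF t iQ iK(1)])
  moreover note asset_optional_sampling[OF t]
  ultimately show "AE \<omega> in M. vaK\<theta> t \<omega> =
      cQ (min t (\<theta> \<omega>)) \<omega> + Q (min t (\<theta> \<omega>)) \<omega> - cexp M F t (\<lambda>\<omega>. cQ (\<theta> \<omega>) \<omega> + Q (\<theta> \<omega>) \<omega>) \<omega>"
    by eventually_elim simp
qed

lemma measurable_at_stopping:
  assumes \<sigma>: "stopping_time_on M F T \<sigma>"
  shows "(\<lambda>\<omega>. cQ (\<sigma> \<omega>) \<omega>) \<in> borel_measurable M" "(\<lambda>\<omega>. Q (\<sigma> \<omega>) \<omega>) \<in> borel_measurable M"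
    "(\<lambda>\<omega>. q (\<sigma> \<omega>) \<omega>) \<in> borel_measurable M" "(\<lambda>\<omega>. p (\<sigma> \<omega>) \<omega>) \<in> borel_measurable M"
    "(\<lambda>\<omega>. Pbad (\<sigma> \<omega>) \<omega>) \<in> borel_measurable M" "(\<lambda>\<omega>. Pnsb (\<sigma> \<omega>) \<omega>) \<in> borel_measurable M"
    "(\<lambda>\<omega>. cPnsb (\<sigma> \<omega>) \<omega>) \<in> borel_measurable M" "\<sigma> \<in> borel_measurable M"
  using regular_process_integrable_stopped[OF _ \<sigma>]
    integrable_at_stopping_integrable[OF cPnsb_integrable_at_stopping \<sigma>] stopping_time_measurable[OF \<sigma>]
    cQ_reg Q_reg q_reg p_reg Pbad_reg Pnsb_reg
  by (auto intro: borel_measurable_integrable)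

lemma PNL_measurable:
  assumes s: "s \<in> {0..T}"
  shows "PNL s \<in> borel_measurable M"
proof -
  note [measurable] = measurable_at_stopping[OF stopping_time_min_const[OF \<theta>_stopping_time s]]
    measurable_at_stopping[OF stopping_time_min_const[OF \<theta>_stopping_time horizon_endpoints(1)]]
    measurable_at_stopping[OF \<theta>_stopping_time] stopping_time_measurable[OF \<tau>s]
  have [measurable]: "h s \<in> borel_measurable M"
    using h_mart s measurable_F_measurable_M unfolding martingale_on_def adapted_def by blast
  show ?thesis unfolding PNL_def pnl_nsb_def from0_def stopped_def ind_before_def by measurable
qed

definition asset_mark :: "real \<Rightarrow> 'a \<Rightarrow> real" where
  "asset_mark s \<omega> = cQ s \<omega> + ind_before \<tau>s s \<omega> * q s \<omega> + (1 - ind_before \<tau>s s \<omega>) * Q s \<omega>"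

definition hedge_mark :: "real \<Rightarrow> 'a \<Rightarrow> real" where
  "hedge_mark s \<omega> = cPnsb s \<omega> + ind_before \<tau>s s \<omega> * Pbad s \<omega> + (1 - ind_before \<tau>s s \<omega>) * Pnsb s \<omega>"

lemma stopped_marks_measurable_integrable:
  assumes t: "t \<in> {0..T}"
  shows "(\<lambda>\<omega>. asset_mark (min t (\<theta> \<omega>)) \<omega>) \<in> borel_measurable (F t)"
    and "(\<lambda>\<omega>. hedge_mark (min t (\<theta> \<omega>)) \<omega>) \<in> borel_measurable (F t)"
    and "integrable M (\<lambda>\<omega>. asset_mark (min t (\<theta> \<omega>)) \<omega>)"
    and "integrable M (\<lambda>\<omega>. hedge_mark (min t (\<theta> \<omega>)) \<omega>)"
proof -
  have \<theta>t: "stopping_time_on M F T (\<lambda>\<omega>. min t (\<theta> \<omega>))"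
    by (rule stopping_time_min_const[OF \<theta>_stopping_time t])
  note adapted = regular_process_adapted and rc = regular_process_right_continuous
    and int = regular_process_integrable_stopped[OF _ \<theta>t]
  show "(\<lambda>\<omega>. asset_mark (min t (\<theta> \<omega>)) \<omega>) \<in> borel_measurable (F t)"
    unfolding asset_mark_def
    by (rule stopped_process_measurable[OF adapted_switch[OF adapted[OF cQ_reg] adapted[OF q_reg]
          adapted[OF Q_reg] \<tau>s] right_continuous_switch[OF rc[OF cQ_reg] rc[OF q_reg] rc[OF Q_reg]]
          \<theta>_stopping_time t])
  show "(\<lambda>\<omega>. hedge_mark (min t (\<theta> \<omega>)) \<omega>) \<in> borel_measurable (F t)"
    unfolding hedge_mark_def
    by (rule stopped_process_measurable[OF adapted_switch[OF cPnsb_adapted adapted[OF Pbad_reg]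
          adapted[OF Pnsb_reg] \<tau>s] right_continuous_switch[OF cPnsb_right_continuous rc[OF Pbad_reg]
          rc[OF Pnsb_reg]] \<theta>_stopping_time t])
  show "integrable M (\<lambda>\<omega>. asset_mark (min t (\<theta> \<omega>)) \<omega>)"
    unfolding asset_mark_def
    by (rule integrable_switch[where X=cQ and Y=q and Z=Q,
          OF int[OF cQ_reg] int[OF q_reg] int[OF Q_reg] \<theta>t \<tau>s])
  show "integrable M (\<lambda>\<omega>. hedge_mark (min t (\<theta> \<omega>)) \<omega>)"
    unfolding hedge_mark_def
    by (rule integrable_switch[where X=cPnsb and Y=Pbad and Z=Pnsb,
          OF integrable_at_stopping_integrable[OF cPnsb_integrable_at_stopping \<theta>t]
          int[OF Pbad_reg] int[OF Pnsb_reg] \<theta>t \<tau>s])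
qed

lemma pnl_increment:
  assumes t: "t \<in> {0..T}"
  shows "AE \<omega> in M. PNL T \<omega> - PNL t \<omega> =
      cQ (\<theta> \<omega>) \<omega> - (cPnsb (\<theta> \<omega>) \<omega> + Pnsb (\<theta> \<omega>) \<omega>)
      + ind_before \<tau>s (\<theta> \<omega>) \<omega> * (Pnsb (\<theta> \<omega>) \<omega> - Pbad (\<theta> \<omega>) \<omega>) - h T \<omega>
      + (hedge_mark (min t (\<theta> \<omega>)) \<omega> - asset_mark (min t (\<theta> \<omega>)) \<omega> + h t \<omega>)"
  using bspec[OF pnl_eq t] bspec[OF pnl_eq horizon_endpoints(2)] zero_call AE_space
proof eventually_elim
  case (elim \<omega>)
  have "min T (\<theta> \<omega>) = \<theta> \<omega>" using \<theta>_range[OF elim(4)] by simp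
  then show ?case using elim(1-3) unfolding from0_def stopped_def asset_mark_def hedge_mark_def
    by (simp add: algebra_simps)
qed

lemma integrable_switched_at_\<theta>:
  "integrable M (\<lambda>\<omega>. ind_before \<tau>s (\<theta> \<omega>) \<omega> * f \<omega>)" if "integrable M f"
proof -
  note [measurable] = measurable_at_stopping(8)[OF \<theta>_stopping_time] stopping_time_measurable[OF \<tau>s]
  have "(\<lambda>\<omega>. ind_before \<tau>s (\<theta> \<omega>) \<omega>) \<in> borel_measurable M" unfolding ind_before_def by measurable
  then show ?thesis
    using integrable_convex_combination[OF that integrable_zero _ ind_before_01] by simp
qed

lemma cexp_pnl_increment:
  assumes t: "t \<in> {0..T}"
  shows "AE \<omega> in M. cexp M F t (\<lambda>\<omega>. PNL T \<omega> - PNL t \<omega>) \<omega> =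
      cexp M F t (\<lambda>\<omega>. cQ (\<theta> \<omega>) \<omega>) \<omega> - (cPnsb (min t (\<theta> \<omega>)) \<omega> + Pnsb (min t (\<theta> \<omega>)) \<omega>)
      + cexp M F t (\<lambda>\<omega>. ind_before \<tau>s (\<theta> \<omega>) \<omega> * (Pnsb (\<theta> \<omega>) \<omega> - Pbad (\<theta> \<omega>) \<omega>)) \<omega>
      + (hedge_mark (min t (\<theta> \<omega>)) \<omega> - asset_mark (min t (\<theta> \<omega>)) \<omega>)"
proof -
  note int = regular_process_integrable_stopped[OF _ \<theta>_stopping_time]
  define a1 where "a1 = (\<lambda>\<omega>. cQ (\<theta> \<omega>) \<omega>)"
  define a3 where "a3 = (\<lambda>\<omega>. ind_before \<tau>s (\<theta> \<omega>) \<omega> * (Pnsb (\<theta> \<omega>) \<omega> - Pbad (\<theta> \<omega>) \<omega>))"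
  define a4 where "a4 = (\<lambda>\<omega>. cPnsb (\<theta> \<omega>) \<omega> + Pnsb (\<theta> \<omega>) \<omega>)"
  define C where "C \<omega> = hedge_mark (min t (\<theta> \<omega>)) \<omega> - asset_mark (min t (\<theta> \<omega>)) \<omega> + h t \<omega>" for \<omega>
  have i1: "integrable M a1" unfolding a1_def by (rule int[OF cQ_reg])
  have i3: "integrable M a3" unfolding a3_def
    using int[OF Pnsb_reg] int[OF Pbad_reg] by (intro integrable_switched_at_\<theta>) simp
  have i4: "integrable M a4" unfolding a4_def
    using int[OF Pnsb_reg] integrable_at_stopping_integrable[OF cPnsb_integrable_at_stopping \<theta>_stopping_time]
    by simp
  have ih: "integrable M (h s)" "h s \<in> borel_measurable (F s)" if "s \<in> {0..T}" for s
    using h_mart that unfolding martingale_on_def adapted_def by blast+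
  have iC: "integrable M C" unfolding C_def using stopped_marks_measurable_integrable[OF t] ih[OF t] by simp
  have CF: "C \<in> borel_measurable (F t)" unfolding C_def using stopped_marks_measurable_integrable[OF t] ih[OF t] by measurable
  note [measurable] = PNL_measurable[OF t] PNL_measurable[OF horizon_endpoints(2)]
  have [measurable]: "C \<in> borel_measurable M" "a1 \<in> borel_measurable M" "a3 \<in> borel_measurable M"
    "a4 \<in> borel_measurable M" "h T \<in> borel_measurable M"
    using iC i1 i3 i4 ih[of T] by auto
  have "AE \<omega> in M. PNL T \<omega> - PNL t \<omega> = a1 \<omega> - a4 \<omega> + a3 \<omega> - h T \<omega> + C \<omega>"
    using pnl_increment[OF t] unfolding a1_def a3_def a4_def C_def by simp
  then have "AE \<omega> in M. cexp M F t (\<lambda>\<omega>. PNL T \<omega> - PNL t \<omega>) \<omega>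
      = cexp M F t (\<lambda>\<omega>. (a1 \<omega> - a4 \<omega> + a3 \<omega> - h T \<omega>) + C \<omega>) \<omega>"
    by (intro cexp_cong[OF t]) auto
  moreover have "AE \<omega> in M. cexp M F t (\<lambda>\<omega>. (a1 \<omega> - a4 \<omega> + a3 \<omega> - h T \<omega>) + C \<omega>) \<omega>
      = cexp M F t (\<lambda>\<omega>. a1 \<omega> - a4 \<omega> + a3 \<omega> - h T \<omega>) \<omega> + C \<omega>"
    using i1 i3 i4 ih[of T] by (intro cexp_add_F_meas[OF t _ iC CF]) auto
  moreover have "AE \<omega> in M. cexp M F t (\<lambda>\<omega>. (a1 \<omega> - a4 \<omega> + a3 \<omega>) - h T \<omega>) \<omega>
      = cexp M F t (\<lambda>\<omega>. a1 \<omega> - a4 \<omega> + a3 \<omega>) \<omega> - cexp M F t (h T) \<omega>"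
    using i1 i3 i4 ih[of T] by (intro cexp_diff[OF t]) auto
  moreover have "AE \<omega> in M. cexp M F t (\<lambda>\<omega>. (a1 \<omega> - a4 \<omega>) + a3 \<omega>) \<omega>
      = cexp M F t (\<lambda>\<omega>. a1 \<omega> - a4 \<omega>) \<omega> + cexp M F t a3 \<omega>"
    using i1 i3 i4 by (intro cexp_add[OF t]) auto
  moreover have "AE \<omega> in M. cexp M F t (\<lambda>\<omega>. a1 \<omega> - a4 \<omega>) \<omega> = cexp M F t a1 \<omega> - cexp M F t a4 \<omega>"
    by (rule cexp_diff[OF t i1 i4])
  moreover have "AE \<omega> in M. cexp M F t a4 \<omega> = cPnsb (min t (\<theta> \<omega>)) \<omega> + Pnsb (min t (\<theta> \<omega>)) \<omega>"
    unfolding a4_def by (rule hedge_optional_sampling[OF t])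
  moreover have "AE \<omega> in M. cexp M F t (h T) \<omega> = h t \<omega>"
    using h_mart t unfolding martingale_on_def by auto
  ultimately show ?thesis
    unfolding a1_def[symmetric] a3_def[symmetric] by eventually_elim (simp add: C_def)
qed

lemma hva_eq_cexp:
  assumes t: "t \<in> {0..T}"
  shows "AE \<omega> in M. HVA t \<omega> =
      cQ (min t (\<theta> \<omega>)) \<omega> + Q (min t (\<theta> \<omega>)) \<omega>
      + ind_before \<tau>s (min t (\<theta> \<omega>)) \<omega> * (q (min t (\<theta> \<omega>)) \<omega> - Q (min t (\<theta> \<omega>)) \<omega>
          - (Pbad (min t (\<theta> \<omega>)) \<omega> - Pnsb (min t (\<theta> \<omega>)) \<omega>))
      - cexp M F t (\<lambda>\<omega>. cQ (\<theta> \<omega>) \<omega>) \<omega>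
      - cexp M F t (\<lambda>\<omega>. ind_before \<tau>s (\<theta> \<omega>) \<omega> * (Pnsb (\<theta> \<omega>) \<omega> - Pbad (\<theta> \<omega>) \<omega>)) \<omega>"
  using cexp_pnl_increment[OF t]
proof eventually_elim
  case (elim \<omega>)
  have "cPnsb (min t (\<theta> \<omega>)) \<omega> + Pnsb (min t (\<theta> \<omega>)) \<omega>
      - hedge_mark (min t (\<theta> \<omega>)) \<omega> + asset_mark (min t (\<theta> \<omega>)) \<omega>
    = cQ (min t (\<theta> \<omega>)) \<omega> + Q (min t (\<theta> \<omega>)) \<omega>
      + ind_before \<tau>s (min t (\<theta> \<omega>)) \<omega> * (q (min t (\<theta> \<omega>)) \<omega> - Q (min t (\<theta> \<omega>)) \<omega>
          - (Pbad (min t (\<theta> \<omega>)) \<omega> - Pnsb (min t (\<theta> \<omega>)) \<omega>))"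
    unfolding asset_mark_def hedge_mark_def by (simp add: algebra_simps)
  then show ?case using elim unfolding HVA_def va_def by linarith
qed

lemma D_plus_vaK\<theta>:
  assumes t: "t \<in> {0..T}"
  shows "AE \<omega> in M. D t \<omega> + vaK\<theta> t \<omega> = cQ (min t (\<theta> \<omega>)) \<omega> + Q (min t (\<theta> \<omega>)) \<omega>
      - cexp M F t (\<lambda>\<omega>. cQ (\<theta> \<omega>) \<omega>) \<omega>
      - cexp M F t (\<lambda>\<omega>. ind_before \<tau>s (\<theta> \<omega>) \<omega> * (Pnsb (\<theta> \<omega>) \<omega> - Pbad (\<theta> \<omega>) \<omega>)) \<omega>"
proof -
  note int = regular_process_integrable_stopped[OF _ \<theta>_stopping_time]
  define a1 where "a1 = (\<lambda>\<omega>. cQ (\<theta> \<omega>) \<omega>)"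
  define a2 where "a2 = (\<lambda>\<omega>. ind_before \<tau>s (\<theta> \<omega>) \<omega> * Q (\<theta> \<omega>) \<omega>)"
  define a3 where "a3 = (\<lambda>\<omega>. ind_before \<tau>s (\<theta> \<omega>) \<omega> * (Pnsb (\<theta> \<omega>) \<omega> - Pbad (\<theta> \<omega>) \<omega>))"
  define a5 where "a5 = (\<lambda>\<omega>. Q (\<theta> \<omega>) \<omega>)"
  have i1: "integrable M a1" and i2: "integrable M a2" and i3: "integrable M a3" and i5: "integrable M a5"
    unfolding a1_def a2_def a3_def a5_def
    using int[OF cQ_reg] int[OF Q_reg] int[OF Pnsb_reg] int[OF Pbad_reg]
    by (auto intro!: integrable_switched_at_\<theta>)
  then have [measurable]: "a2 \<in> borel_measurable M" "a5 \<in> borel_measurable M" by auto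
  have D_eq: "D t = cexp M F t (\<lambda>\<omega>. a2 \<omega> - a3 \<omega>)"
    unfolding D_def a2_def a3_def by (simp add: algebra_simps)
  \<comment> \<open>If the call happens after the switch, it happens at zero fair value \<open>Q \<theta>\<close>.\<close>
  have "AE \<omega> in M. a5 \<omega> = a2 \<omega>"
    using zero_call by eventually_elim (auto simp: a2_def a5_def ind_before_def split: if_splits)
  then have "AE \<omega> in M. cexp M F t a5 \<omega> = cexp M F t a2 \<omega>" by (intro cexp_cong[OF t]) auto
  moreover have "AE \<omega> in M. vaK\<theta> t \<omega> = cQ (min t (\<theta> \<omega>)) \<omega> + Q (min t (\<theta> \<omega>)) \<omega>
      - cexp M F t (\<lambda>\<omega>. a1 \<omega> + a5 \<omega>) \<omega>"
    using bspec[OF vaK\<theta>_eq t] unfolding a1_def a5_def by simp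
  moreover have "AE \<omega> in M. cexp M F t (\<lambda>\<omega>. a2 \<omega> - a3 \<omega>) \<omega> = cexp M F t a2 \<omega> - cexp M F t a3 \<omega>"
    by (rule cexp_diff[OF t i2 i3])
  moreover have "AE \<omega> in M. cexp M F t (\<lambda>\<omega>. a1 \<omega> + a5 \<omega>) \<omega> = cexp M F t a1 \<omega> + cexp M F t a5 \<omega>"
    by (rule cexp_add[OF t i1 i5])
  ultimately show ?thesis
    unfolding D_eq a1_def[symmetric] a3_def[symmetric] by eventually_elim linarith
qed

lemma hva_eq: "\<forall>t\<in>{0..T}. AE \<omega> in M. HVA t \<omega> =
        stopped (\<lambda>t \<omega>. ind_before \<tau>s t \<omega> * (q t \<omega> - Q t \<omega> - (Pbad t \<omega> - Pnsb t \<omega>))) \<theta> t \<omega>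
        + D t \<omega> + vaK\<theta> t \<omega>"
proof
  fix t assume t: "t \<in> {0..T}"
  show "AE \<omega> in M. HVA t \<omega> =
        stopped (\<lambda>t \<omega>. ind_before \<tau>s t \<omega> * (q t \<omega> - Q t \<omega> - (Pbad t \<omega> - Pnsb t \<omega>))) \<theta> t \<omega>
        + D t \<omega> + vaK\<theta> t \<omega>"
    using hva_eq_cexp[OF t] D_plus_vaK\<theta>[OF t] unfolding stopped_def by eventually_elim linarith
qed

lemma hva_0_eq: "AE \<omega> in M. HVA 0 \<omega> =
        q 0 \<omega> - cexp M F 0 (\<lambda>\<omega>. cQ (\<theta> \<omega>) \<omega>) \<omega> - (p 0 \<omega> - Pnsb 0 \<omega>)
        - cexp M F 0 (\<lambda>\<omega>. ind_before \<tau>s (\<theta> \<omega>) \<omega> * (Pnsb (\<theta> \<omega>) \<omega> - p (\<theta> \<omega>) \<omega>)) \<omega>"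
proof -
  note [measurable] = measurable_at_stopping[OF \<theta>_stopping_time] stopping_time_measurable[OF \<tau>s]
  \<comment> \<open>Before the switch the trader's hedge price \<open>p\<close> is \<open>Pbad\<close>.\<close>
  have "AE \<omega> in M. ind_before \<tau>s (\<theta> \<omega>) \<omega> * (Pnsb (\<theta> \<omega>) \<omega> - p (\<theta> \<omega>) \<omega>)
      = ind_before \<tau>s (\<theta> \<omega>) \<omega> * (Pnsb (\<theta> \<omega>) \<omega> - Pbad (\<theta> \<omega>) \<omega>)"
    using p_eq_Pbad_before_switch AE_space
    by eventually_elim (auto simp: ind_before_def dest: \<theta>_range)
  then have "AE \<omega> in M. cexp M F 0 (\<lambda>\<omega>. ind_before \<tau>s (\<theta> \<omega>) \<omega> * (Pnsb (\<theta> \<omega>) \<omega> - p (\<theta> \<omega>) \<omega>)) \<omega>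
      = cexp M F 0 (\<lambda>\<omega>. ind_before \<tau>s (\<theta> \<omega>) \<omega> * (Pnsb (\<theta> \<omega>) \<omega> - Pbad (\<theta> \<omega>) \<omega>)) \<omega>"
    by (intro cexp_cong) (auto simp: ind_before_def)
  moreover have "AE \<omega> in M. p 0 \<omega> = Pbad 0 \<omega>"
    using bspec[OF p_Pbad horizon_endpoints(1)] AE_space by eventually_elim (use \<tau>s_pos in auto)
  moreover note hva_eq_cexp[OF horizon_endpoints(1)] AE_space
  ultimately show ?thesis
  proof eventually_elim
    case (elim \<omega>)
    have "min 0 (\<theta> \<omega>) = 0" "ind_before \<tau>s 0 \<omega> = 1" "cQ 0 \<omega> = 0"
      using \<theta>_range[OF elim(4)] \<tau>s_pos elim(4) cQ unfolding ind_before_def cash_flow_def by auto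
    then show ?case using elim(1-3) by simp
  qed
qed

lemma pnl_decomposition: "\<forall>t\<in>{0..T}. AE \<omega> in M. - PNL t \<omega> + (HVA t \<omega> - HVA 0 \<omega>) =
        - from0 (stopped (\<lambda>t \<omega>. cQ t \<omega> + Q t \<omega>) \<theta>) t \<omega>
        + from0 (stopped (\<lambda>t \<omega>. cPnsb t \<omega> + Pnsb t \<omega>) \<theta>) t \<omega>
        + h t \<omega> + from0 D t \<omega> + from0 vaK\<theta> t \<omega>"
proof
  fix t assume t: "t \<in> {0..T}"
  show "AE \<omega> in M. - PNL t \<omega> + (HVA t \<omega> - HVA 0 \<omega>) =
        - from0 (stopped (\<lambda>t \<omega>. cQ t \<omega> + Q t \<omega>) \<theta>) t \<omega>
        + from0 (stopped (\<lambda>t \<omega>. cPnsb t \<omega> + Pnsb t \<omega>) \<theta>) t \<omega>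
        + h t \<omega> + from0 D t \<omega> + from0 vaK\<theta> t \<omega>"
    using bspec[OF pnl_eq t] bspec[OF hva_eq t] bspec[OF hva_eq horizon_endpoints(1)]
  proof eventually_elim
    case (elim \<omega>)
    have "- (cQ s \<omega> + ind_before \<tau>s s \<omega> * q s \<omega> + (1 - ind_before \<tau>s s \<omega>) * Q s \<omega>)
       + (cPnsb s \<omega> + ind_before \<tau>s s \<omega> * Pbad s \<omega> + (1 - ind_before \<tau>s s \<omega>) * Pnsb s \<omega>)
       + ind_before \<tau>s s \<omega> * (q s \<omega> - Q s \<omega> - (Pbad s \<omega> - Pnsb s \<omega>))
       = - (cQ s \<omega> + Q s \<omega>) + (cPnsb s \<omega> + Pnsb s \<omega>)" for s
      by (simp add: algebra_simps)
    from this[of "min t (\<theta> \<omega>)"] this[of "min 0 (\<theta> \<omega>)"] show ?case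
      using elim unfolding from0_def stopped_def by linarith
  qed
qed

end

theorem proposition3p3:
  fixes M :: "'a measure" and F :: "real \<Rightarrow> 'a measure" and T :: real
    and cQ Q K q p cPbad cPgood Pbad Pnsb h :: "real \<Rightarrow> 'a \<Rightarrow> real"
    and \<tau>s \<theta>star \<tau>star \<theta> :: "'a \<Rightarrow> real"
    and cPnsb PNL HVA D vaK\<theta> :: "real \<Rightarrow> 'a \<Rightarrow> real"
  assumes \<theta>_def: "\<theta> = exit_time \<theta>star \<tau>star \<tau>s"
    and cPnsb_def: "cPnsb = nsb_flow cPbad cPgood \<tau>s \<theta>"
    and PNL_def: "PNL = pnl_nsb cQ q Q cPnsb p Pnsb h \<tau>s \<theta>"
    and HVA_def: "HVA = (\<lambda>t \<omega>. - va M F T PNL t \<omega>)"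
    and D_def: "D = (\<lambda>t. cexp M F t (\<lambda>\<omega>. ind_before \<tau>s (\<theta> \<omega>) \<omega> *
                      (Q (\<theta> \<omega>) \<omega> - (Pnsb (\<theta> \<omega>) \<omega> - Pbad (\<theta> \<omega>) \<omega>))))"
    and vaK\<theta>_def: "vaK\<theta> = va M F T (stopped K \<theta>)"
    and prob: "prob_space M"
    and filt: "usual_filtration M F T"
    and cQ: "cash_flow M F T cQ"
    and Q_reg: "regular_process M F T Q"
    and Q_val: "fair_callable_value M F T cQ Q"
    and K: "is_drift M F T (\<lambda>t \<omega>. cQ t \<omega> + Q t \<omega>) K"
    and q_semi: "semimartingale M F T q" and q_reg: "regular_process M F T q"
    and q_T: "\<forall>\<omega>\<in>space M. q T \<omega> = 0"
    and p_semi: "semimartingale M F T p" and p_reg: "regular_process M F T p"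
    and \<tau>s: "stopping_time_on M F T \<tau>s" and \<tau>s_pos: "\<forall>\<omega>\<in>space M. 0 < \<tau>s \<omega>"
    and cPbad: "cash_flow M F T cPbad" and cPgood: "cash_flow M F T cPgood"
    and Pbad_reg: "regular_process M F T Pbad"
    and Pbad_val: "\<forall>t\<in>{0..T}. AE \<omega> in M. Pbad t \<omega> = va M F T cPbad t \<omega>"
    and p_Pbad: "\<forall>t\<in>{0..T}. AE \<omega> in M. t < \<tau>s \<omega> \<longrightarrow> p t \<omega> = Pbad t \<omega>"
    and \<theta>star: "stopping_time_on M F T \<theta>star" and \<theta>star_le: "\<forall>\<omega>\<in>space M. \<theta>star \<omega> \<le> \<tau>s \<omega>"
    and \<tau>star: "stopping_time_on M F T \<tau>star" and \<tau>star_ge: "\<forall>\<omega>\<in>space M. \<tau>s \<omega> \<le> \<tau>star \<omega>"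
    and \<tau>star_opt: "AE \<omega> in M. real_cond_exp M (stopped_sigma M F T \<tau>s)
                      (\<lambda>\<omega>. cQ (\<tau>star \<omega>) \<omega> - cQ (\<tau>s \<omega>) \<omega>) \<omega> = Q (\<tau>s \<omega>) \<omega>"
    and zero_call: "AE \<omega> in M. ind_before \<tau>s (\<theta> \<omega>) \<omega> * q (\<theta> \<omega>) \<omega>
                      + (1 - ind_before \<tau>s (\<theta> \<omega>) \<omega>) * Q (\<theta> \<omega>) \<omega> = 0"
    and Pnsb_reg: "regular_process M F T Pnsb"
    and Pnsb_val: "\<forall>t\<in>{0..T}. AE \<omega> in M. Pnsb t \<omega> = va M F T cPnsb t \<omega>"
    and h_mart: "martingale_on M F T h" and h_cadlag: "cadlag_process M T h"
    and h_stop: "\<forall>t\<in>{0..T}. \<forall>\<omega>\<in>space M. h t \<omega> = stopped h \<theta> t \<omega>"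
  shows
    "(\<forall>t\<in>{0..T}. AE \<omega> in M. PNL t \<omega> =
        from0 (stopped (\<lambda>t \<omega>. cQ t \<omega> + ind_before \<tau>s t \<omega> * q t \<omega> + (1 - ind_before \<tau>s t \<omega>) * Q t \<omega>) \<theta>) t \<omega>
        - from0 (stopped (\<lambda>t \<omega>. cPnsb t \<omega> + ind_before \<tau>s t \<omega> * Pbad t \<omega> + (1 - ind_before \<tau>s t \<omega>) * Pnsb t \<omega>) \<theta>) t \<omega>
        - h t \<omega>)
   \<and> (\<forall>t\<in>{0..T}. AE \<omega> in M. HVA t \<omega> =
        stopped (\<lambda>t \<omega>. ind_before \<tau>s t \<omega> * (q t \<omega> - Q t \<omega> - (Pbad t \<omega> - Pnsb t \<omega>))) \<theta> t \<omega>
        + D t \<omega> + vaK\<theta> t \<omega>)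
   \<and> (\<forall>t\<in>{0..T}. AE \<omega> in M. vaK\<theta> t \<omega> =
        cQ (min t (\<theta> \<omega>)) \<omega> + Q (min t (\<theta> \<omega>)) \<omega> - cexp M F t (\<lambda>\<omega>. cQ (\<theta> \<omega>) \<omega> + Q (\<theta> \<omega>) \<omega>) \<omega>)
   \<and> (AE \<omega> in M. HVA 0 \<omega> =
        q 0 \<omega> - cexp M F 0 (\<lambda>\<omega>. cQ (\<theta> \<omega>) \<omega>) \<omega> - (p 0 \<omega> - Pnsb 0 \<omega>)
        - cexp M F 0 (\<lambda>\<omega>. ind_before \<tau>s (\<theta> \<omega>) \<omega> * (Pnsb (\<theta> \<omega>) \<omega> - p (\<theta> \<omega>) \<omega>)) \<omega>)
   \<and> (\<forall>t\<in>{0..T}. AE \<omega> in M. - PNL t \<omega> + (HVA t \<omega> - HVA 0 \<omega>) =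
        - from0 (stopped (\<lambda>t \<omega>. cQ t \<omega> + Q t \<omega>) \<theta>) t \<omega>
        + from0 (stopped (\<lambda>t \<omega>. cPnsb t \<omega> + Pnsb t \<omega>) \<theta>) t \<omega>
        + h t \<omega> + from0 D t \<omega> + from0 vaK\<theta> t \<omega>)"
proof -
  obtain \<omega>0 where "\<omega>0 \<in> space M" using prob_space.not_empty[OF prob] by blast
  then have T: "0 < T" using \<tau>s_pos \<tau>s unfolding stopping_time_on_def by force
  interpret not_so_bad_trader M F T cQ Q K q p cPbad cPgood Pbad Pnsb h \<tau>s \<theta>star \<tau>star \<theta>
      cPnsb PNL HVA D vaK\<theta>
  proof (intro not_so_bad_trader.intro filtered_prob_space.intro filtered_prob_space_axioms.intro
      not_so_bad_trader_axioms.intro)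
    note filt = filt[unfolded usual_filtration_def]
    show "subalgebra M (F t)" if "t \<in> {0..T}" for t
      using filt[THEN conjunct1] that by blast
    show "sets (F s) \<subseteq> sets (F t)" if "0 \<le> s" "s \<le> t" "t \<le> T" for s t
      using filt[THEN conjunct2, THEN conjunct1] that by blast
  qed (fact | rule T)+
  show ?thesis using pnl_eq hva_eq vaK\<theta>_eq hva_0_eq pnl_decomposition by blast
qed

end
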